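(* Let $n=0$ and suppose $m^2<r$. Then $\bar{\mathcal{A}}_q=\bar{\mathcal{C}}_q$ and $\operatorname{End}_{\bar{\mathcal{C}}_q}\bar V^{\otimes r}=\operatorname{End}_{\bar{\mathcal{A}}_q}\bar V^{\otimes r}$.
   Context: $q$ indeterminate, $K=\mathbb{Q}(q)$, $\bar K$ an algebraic closure, $r\ge2$. $\mathcal{H}_{\bar K,r}(q)$ is the type $A$ Iwahori–Hecke algebra over $\bar K$ (generators $T_1,\dots,T_{r-1}$, $T_i^2=(q-q^{-1})T_i+1$, braid relations); the Goldman involution is the algebra automorphism with $\hat T_i=(q-q^{-1})-T_i$, and $\mathcal{H}^1_{\bar K,r}(q)=\{X:\hat X=X\}$. $\bar V$ is the $\bar K$-space with basis $v_1,\dots,v_m$ (all of even degree, $n=0$). $\pi_r$ is the $q$-permutation representation on $\bar V^{\otimes r}$: $\pi_r(T_i)=\mathrm{Id}^{\otimes i-1}\otimes T\otimes\mathrm{Id}^{\otimes r-i-1}$ with $T(v_k\otimes v_k)=q\,v_k\otimes v_k$, $T(v_k\otimes v_l)=v_l\otimes v_k+(q-q^{-1})v_k\otimes v_l$ for $k<l$, $T(v_k\otimes v_l)=v_l\otimes v_k$ for $k>l$. $\bar{\mathcal{A}}_q=\pi_r(\mathcal{H}_{\bar K,r}(q))$, $\bar{\mathcal{C}}_q=\pi_r(\mathcal{H}^1_{\bar K,r}(q))$. *)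

theory Defs
  imports "HOL-Computational_Algebra.Polynomial"
begin

definition alg_closed_field :: "'k::field itself \<Rightarrow> bool" where
  "alg_closed_field _ \<longleftrightarrow> (\<forall>p :: 'k poly. degree p > 0 \<longrightarrow> (\<exists>x. poly p x = 0))"

definition transcendental_over_Q :: "'k::field_char_0 \<Rightarrow> bool" where
  "transcendental_over_Q q \<longleftrightarrow> (\<forall>p :: rat poly. p \<noteq> 0 \<longrightarrow> poly (map_poly of_rat p) q \<noteq> 0)"

definition ratfun_field :: "'k::field_char_0 \<Rightarrow> 'k set" where
  "ratfun_field q = {poly (map_poly of_rat a) q / poly (map_poly of_rat b) q | a b :: rat poly.
                      poly (map_poly of_rat b) q \<noteq> 0}"

definition algebraic_over_ratfun :: "'k::field_char_0 \<Rightarrow> 'k \<Rightarrow> bool" where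
  "algebraic_over_ratfun q x \<longleftrightarrow>
     (\<exists>p :: 'k poly. p \<noteq> 0 \<and> (\<forall>i. coeff p i \<in> ratfun_field q) \<and> poly p x = 0)"

definition is_alg_closure_of_Qq :: "'k::field_char_0 \<Rightarrow> bool" where
  "is_alg_closure_of_Qq q \<longleftrightarrow> alg_closed_field TYPE('k) \<and> transcendental_over_Q q
     \<and> (\<forall>x. algebraic_over_ratfun q x)"

datatype 'k hexp = HC 'k | HT nat | HAdd "'k hexp" "'k hexp" | HMul "'k hexp" "'k hexp"

text \<open>Equality in the Hecke algebra H_r(q): the congruence generated by the axioms of an
  associative 'k-algebra (scalars central) and the defining relations; generators T_i with
  i outside 1..r-1 are identified with 0 (i.e. they do not exist).\<close>
inductive heq :: "nat \<Rightarrow> 'k::field \<Rightarrow> 'k hexp \<Rightarrow> 'k hexp \<Rightarrow> bool" for r q where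
  h_refl: "heq r q a a"
| h_sym: "heq r q a b \<Longrightarrow> heq r q b a"
| h_trans: "heq r q a b \<Longrightarrow> heq r q b c \<Longrightarrow> heq r q a c"
| h_add_cong: "heq r q a a' \<Longrightarrow> heq r q b b' \<Longrightarrow> heq r q (HAdd a b) (HAdd a' b')"
| h_mul_cong: "heq r q a a' \<Longrightarrow> heq r q b b' \<Longrightarrow> heq r q (HMul a b) (HMul a' b')"
| h_add_assoc: "heq r q (HAdd (HAdd a b) c) (HAdd a (HAdd b c))"
| h_add_comm: "heq r q (HAdd a b) (HAdd b a)"
| h_add_zero: "heq r q (HAdd a (HC 0)) a"
| h_add_inv: "heq r q (HAdd a (HMul (HC (-1)) a)) (HC 0)"
| h_mul_assoc: "heq r q (HMul (HMul a b) c) (HMul a (HMul b c))"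
| h_mul_one_l: "heq r q (HMul (HC 1) a) a"
| h_mul_one_r: "heq r q (HMul a (HC 1)) a"
| h_distrib_l: "heq r q (HMul a (HAdd b c)) (HAdd (HMul a b) (HMul a c))"
| h_distrib_r: "heq r q (HMul (HAdd a b) c) (HAdd (HMul a c) (HMul b c))"
| h_const_add: "heq r q (HAdd (HC x) (HC y)) (HC (x + y))"
| h_const_mul: "heq r q (HMul (HC x) (HC y)) (HC (x * y))"
| h_const_central: "heq r q (HMul (HC x) a) (HMul a (HC x))"
| h_quad: "1 \<le> i \<Longrightarrow> i < r \<Longrightarrow>
     heq r q (HMul (HT i) (HT i)) (HAdd (HMul (HC (q - inverse q)) (HT i)) (HC 1))"
| h_braid: "1 \<le> i \<Longrightarrow> i + 1 < r \<Longrightarrow>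
     heq r q (HMul (HT i) (HMul (HT (i+1)) (HT i))) (HMul (HT (i+1)) (HMul (HT i) (HT (i+1))))"
| h_comm: "1 \<le> i \<Longrightarrow> i + 1 < j \<Longrightarrow> j < r \<Longrightarrow>
     heq r q (HMul (HT i) (HT j)) (HMul (HT j) (HT i))"
| h_nogen: "i = 0 \<or> r \<le> i \<Longrightarrow> heq r q (HT i) (HC 0)"

fun goldman :: "nat \<Rightarrow> 'k::field \<Rightarrow> 'k hexp \<Rightarrow> 'k hexp" where
  "goldman r q (HC c) = HC c"
| "goldman r q (HT i) = (if 1 \<le> i \<and> i < r
       then HAdd (HC (q - inverse q)) (HMul (HC (-1)) (HT i)) else HT i)"
| "goldman r q (HAdd a b) = HAdd (goldman r q a) (goldman r q b)"
| "goldman r q (HMul a b) = HMul (goldman r q a) (goldman r q b)"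

text \<open>Basis of V^{\<otimes> r}: v_{xs!0} \<otimes> ... \<otimes> v_{xs!(r-1)}, with indices 0..m-1
  (index k stands for v_{k+1}). Linear endomorphisms are matrices M a b
  (coefficient of basis vector a in the image of basis vector b), vanishing off the index set.\<close>
definition tidx :: "nat \<Rightarrow> nat \<Rightarrow> nat list set" where
  "tidx r m = {xs. set xs \<subseteq> {..<m} \<and> length xs = r}"

type_synonym 'k tmat = "nat list \<Rightarrow> nat list \<Rightarrow> 'k"

definition tsupp :: "nat \<Rightarrow> nat \<Rightarrow> 'k::zero tmat \<Rightarrow> bool" where
  "tsupp r m M \<longleftrightarrow> (\<forall>a b. a \<notin> tidx r m \<or> b \<notin> tidx r m \<longrightarrow> M a b = 0)"

definition tmul :: "nat \<Rightarrow> nat \<Rightarrow> 'k::comm_ring_1 tmat \<Rightarrow> 'k tmat \<Rightarrow> 'k tmat" where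
  "tmul r m M N = (\<lambda>a b. \<Sum>c\<in>tidx r m. M a c * N c b)"

definition tid :: "nat \<Rightarrow> nat \<Rightarrow> 'k::comm_ring_1 tmat" where
  "tid r m = (\<lambda>a b. if a = b \<and> a \<in> tidx r m then 1 else 0)"

definition swap_at :: "nat \<Rightarrow> nat list \<Rightarrow> nat list" where
  "swap_at i xs = xs[i - 1 := xs ! i, i := xs ! (i - 1)]"

text \<open>pi_r(T_i) = Id^{i-1} \<otimes> T \<otimes> Id^{r-i-1}, acting on tensor slots i and i+1
  (list positions i-1 and i).\<close>
definition Tmat :: "nat \<Rightarrow> nat \<Rightarrow> 'k::field \<Rightarrow> nat \<Rightarrow> 'k tmat" where
  "Tmat r m q i = (\<lambda>a b.
     if a \<in> tidx r m \<and> b \<in> tidx r m then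
       (let k = b ! (i - 1); l = b ! i in
        if k = l then (if a = b then q else 0)
        else if k < l then (if a = swap_at i b then 1 else 0) + (if a = b then q - inverse q else 0)
        else (if a = swap_at i b then 1 else 0))
     else 0)"

text \<open>The representation pi_r on expressions (well defined on H since relations hold).\<close>
fun pi_r :: "nat \<Rightarrow> nat \<Rightarrow> 'k::field \<Rightarrow> 'k hexp \<Rightarrow> 'k tmat" where
  "pi_r r m q (HC c) = (\<lambda>a b. c * tid r m a b)"
| "pi_r r m q (HT i) = (if 1 \<le> i \<and> i < r then Tmat r m q i else (\<lambda>a b. 0))"
| "pi_r r m q (HAdd x y) = (\<lambda>a b. pi_r r m q x a b + pi_r r m q y a b)"
| "pi_r r m q (HMul x y) = tmul r m (pi_r r m q x) (pi_r r m q y)"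

definition A_q :: "nat \<Rightarrow> nat \<Rightarrow> 'k::field \<Rightarrow> 'k tmat set" where
  "A_q r m q = range (pi_r r m q)"

definition C_q :: "nat \<Rightarrow> nat \<Rightarrow> 'k::field \<Rightarrow> 'k tmat set" where
  "C_q r m q = pi_r r m q ` {X. heq r q (goldman r q X) X}"

definition End_comm :: "nat \<Rightarrow> nat \<Rightarrow> 'k::field tmat set \<Rightarrow> 'k tmat set" where
  "End_comm r m S = {M. tsupp r m M \<and> (\<forall>X\<in>S. tmul r m M X = tmul r m X M)}"

end

(*
  Let Z be the sum over all transpositions (k l) of q^len T_w, where w is the palindromic word
  s_l ... s_(k+1) ... s_l of odd length. If pi(Z) and pi(goldman Z) have no common eigenvalue,
  then for the characteristic polynomial chi of pi(goldman Z) a polynomial multiple E of chi(Z)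
  satisfies pi(E) = 1 and pi(goldman E) = 0 (Cayley-Hamilton), and X |-> E X + goldman (E X)
  turns every element into a Goldman-fixed one with the same image; so A_q = C_q.

  The determinant of chi(pi(Z)) is a polynomial in q with rational coefficients. At q = 1,
  pi(Z) is the sum M of the permutation matrices of all transpositions of tensor slots and
  pi(goldman Z) = -M. When m^2 < r, M is positive definite: its quadratic form is a sum of
  squared norms of gl_m-operators plus sum_a |f a|^2 (e(a) - r (m - 1)), where e(a) counts the
  ordered pairs of distinct slots of a with equal entries, and e(a) > r (m - 1) by
  Cauchy-Schwarz. So the determinant is a nonzero polynomial and does not vanish at the
  transcendental q.
*)
theory Submission
  imports Defs "Jordan_Normal_Form.Char_Poly" "HOL-Analysis.Convex"
begin

section \<open>Polynomials evaluated at square matrices\<close>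

definition poly_mat :: "'a::comm_ring_1 poly \<Rightarrow> 'a mat \<Rightarrow> 'a mat" where
  "poly_mat p A =
     foldr (\<lambda>a B. a \<cdot>\<^sub>m 1\<^sub>m (dim_row A) + A * B) (coeffs p) (0\<^sub>m (dim_row A) (dim_row A))"

lemma poly_mat_dim [simp]:
  "dim_row (poly_mat p A) = dim_row A" "dim_col (poly_mat p A) = dim_row A"
proof -
  have "dim_row (foldr (\<lambda>a B. a \<cdot>\<^sub>m 1\<^sub>m (dim_row A) + A * B) xs (0\<^sub>m (dim_row A) (dim_row A)))
      = dim_row A \<and>
    dim_col (foldr (\<lambda>a B. a \<cdot>\<^sub>m 1\<^sub>m (dim_row A) + A * B) xs (0\<^sub>m (dim_row A) (dim_row A)))
      = dim_row A" for xs
    by (induction xs) auto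
  then show "dim_row (poly_mat p A) = dim_row A" "dim_col (poly_mat p A) = dim_row A"
    unfolding poly_mat_def by blast+
qed

lemma poly_mat_carrier [simp]: "A \<in> carrier_mat n n \<Longrightarrow> poly_mat p A \<in> carrier_mat n n"
  by (metis carrier_matD carrier_matI poly_mat_dim)

lemma poly_mat_0 [simp]: "A \<in> carrier_mat n n \<Longrightarrow> poly_mat 0 A = 0\<^sub>m n n"
  unfolding poly_mat_def by auto

lemma poly_mat_pCons:
  assumes A: "A \<in> carrier_mat n n"
  shows "poly_mat (pCons a p) A = a \<cdot>\<^sub>m 1\<^sub>m n + A * poly_mat p A"
proof (cases "a = 0 \<and> p = 0")
  case True
  then show ?thesis using A by (auto simp: poly_mat_def)
next
  case False
  then have "coeffs (pCons a p) = a # coeffs p"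
    by (auto simp: cCons_def)
  then show ?thesis using A unfolding poly_mat_def by auto
qed

lemma poly_mat_const: "A \<in> carrier_mat n n \<Longrightarrow> poly_mat [:c:] A = c \<cdot>\<^sub>m 1\<^sub>m n"
  by (simp add: poly_mat_pCons)

lemma poly_mat_one: "A \<in> carrier_mat n n \<Longrightarrow> poly_mat 1 A = 1\<^sub>m n"
  using poly_mat_const[of A n 1] by (simp add: one_pCons[symmetric], intro eq_matI, auto)

lemma poly_mat_linear:
  fixes A :: "'a::field mat"
  assumes A: "A \<in> carrier_mat n n"
  shows "poly_mat [:- a, 1:] A = char_matrix A a"
  using A by (simp add: poly_mat_pCons char_matrix_def, intro eq_matI, auto)

lemma poly_mat_add:
  assumes A: "A \<in> carrier_mat n n"
  shows "poly_mat (p + q) A = poly_mat p A + poly_mat q A"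
proof (induction p arbitrary: q rule: pCons_induct)
  case 0
  then show ?case using A by simp
next
  case (pCons a p)
  show ?case
  proof (cases q rule: pCons_cases)
    case (pCons b q')
    have "poly_mat (pCons a p + q) A = poly_mat (pCons (a+b) (p + q')) A" using pCons by simp
    also have "\<dots> = (a+b) \<cdot>\<^sub>m 1\<^sub>m n + A * (poly_mat p A + poly_mat q' A)"
      using A pCons.IH by (simp add: poly_mat_pCons)
    also have "\<dots> = (a \<cdot>\<^sub>m 1\<^sub>m n + A * poly_mat p A) + (b \<cdot>\<^sub>m 1\<^sub>m n + A * poly_mat q' A)"
      using A
      by (simp add: mult_add_distrib_mat[OF A poly_mat_carrier[OF A] poly_mat_carrier[OF A]],
          intro eq_matI, auto simp: algebra_simps)
    finally show ?thesis using A pCons by (simp add: poly_mat_pCons)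
  qed
qed

lemma poly_mat_smult:
  assumes A: "A \<in> carrier_mat n n"
  shows "poly_mat (Polynomial.smult c p) A = c \<cdot>\<^sub>m poly_mat p A"
proof (induction p rule: pCons_induct)
  case 0
  then show ?case using A by simp
next
  case (pCons a p)
  then show ?case using A
    by (simp add: poly_mat_pCons add_smult_distrib_left_mat[of _ n n]
        mult_smult_distrib[OF A poly_mat_carrier[OF A]], intro eq_matI, auto simp: algebra_simps)
qed

lemma zero_smult_one_add: "X \<in> carrier_mat n n \<Longrightarrow> (0::'a::comm_ring_1) \<cdot>\<^sub>m 1\<^sub>m n + X = X"
  by (rule eq_matI) auto

lemma poly_mat_monom1:
  assumes A: "A \<in> carrier_mat n n"
  shows "poly_mat (pCons 0 p) A = A * poly_mat p A"
  using A by (simp add: poly_mat_pCons zero_smult_one_add)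

lemma poly_mat_mult:
  assumes A: "A \<in> carrier_mat n n"
  shows "poly_mat (p * q) A = poly_mat p A * poly_mat q A"
proof (induction p rule: pCons_induct)
  case 0
  then show ?case using A by (simp add: left_mult_zero_mat[OF poly_mat_carrier[OF A]])
next
  case (pCons a p)
  have "pCons a p * q = Polynomial.smult a q + pCons 0 (p * q)" by simp
  then have "poly_mat (pCons a p * q) A = a \<cdot>\<^sub>m poly_mat q A + A * (poly_mat p A * poly_mat q A)"
    using A pCons by (simp add: poly_mat_add poly_mat_smult poly_mat_monom1)
  also have "\<dots> = (a \<cdot>\<^sub>m 1\<^sub>m n) * poly_mat q A + (A * poly_mat p A) * poly_mat q A"
    using A by (simp add: mult_smult_assoc_mat[OF one_carrier_mat poly_mat_carrier[OF A]]
        assoc_mult_mat[OF A poly_mat_carrier[OF A] poly_mat_carrier[OF A]])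
  also have "\<dots> = poly_mat (pCons a p) A * poly_mat q A"
    using A
    by (simp add: poly_mat_pCons add_mult_distrib_mat[OF smult_carrier_mat[OF one_carrier_mat]
          mult_carrier_mat[OF A poly_mat_carrier[OF A]] poly_mat_carrier[OF A]])
  finally show ?case .
qed

lemma (in comm_ring_hom) map_mat_poly_mat:
  assumes A: "A \<in> carrier_mat n n"
  shows "map_mat hom (poly_mat p A) = poly_mat (map_poly hom p) (map_mat hom A)"
proof (induction p rule: pCons_induct)
  case 0
  then show ?case using A by (intro eq_matI) auto
next
  case (pCons a p)
  have P: "poly_mat p A \<in> carrier_mat n n" using A by simp
  have "map_poly hom (pCons a p) = pCons (hom a) (map_poly hom p)"
    by (cases "a = 0 \<and> p = 0") (auto simp: map_poly_pCons)
  moreover have "map_mat hom (a \<cdot>\<^sub>m 1\<^sub>m n + A * poly_mat p A) =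
      hom a \<cdot>\<^sub>m 1\<^sub>m n + map_mat hom A * map_mat hom (poly_mat p A)"
    unfolding mat_hom_mult[OF A P, symmetric] using A P by (intro eq_matI) (auto simp: hom_add)
  ultimately show ?case using A pCons.IH by (simp add: poly_mat_pCons)
qed

lemma poly_shift_pCons: "poly_shift j p = pCons (coeff p j) (poly_shift (Suc j) p)"
  by (simp add: poly_eq_iff coeff_poly_shift coeff_pCons split: nat.split)

definition coeff_mat :: "'a::zero poly mat \<Rightarrow> nat \<Rightarrow> 'a mat" where
  "coeff_mat M k = mat (dim_row M) (dim_col M) (\<lambda>ij. coeff (M $$ ij) k)"

lemma coeff_char_poly_matrix_mult:
  fixes A :: "'a::comm_ring_1 mat"
  assumes A: "A \<in> carrier_mat n n" and M: "M \<in> carrier_mat n n" and ij: "i < n" "j < n"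
  shows "coeff ((char_poly_matrix A * M) $$ (i, j)) k =
    (case k of 0 \<Rightarrow> 0 | Suc k' \<Rightarrow> coeff_mat M k' $$ (i, j)) - (A * coeff_mat M k) $$ (i, j)"
proof -
  have entry: "coeff (((if i = l then [:0,1:] else 0) + [:- a:]) * P) k =
     (if i = l then (case k of 0 \<Rightarrow> 0 | Suc k' \<Rightarrow> coeff P k') else 0) - a * coeff P k"
    for l a and P :: "'a poly"
    by (cases k) (auto simp: algebra_simps coeff_pCons)
  have "(char_poly_matrix A * M) $$ (i, j) = (\<Sum>l<n. char_poly_matrix A $$ (i, l) * M $$ (l, j))"
    using char_poly_matrix_closed[OF A] M ij by (simp add: scalar_prod_def lessThan_atLeast0)
  also have "\<dots> = (\<Sum>l<n. ((if i = l then [:0,1:] else 0) + [:- A $$ (i, l):]) * M $$ (l, j))"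
    using A ij by (intro sum.cong refl) (simp add: char_poly_matrix_def)
  finally have "(char_poly_matrix A * M) $$ (i, j) =
      (\<Sum>l<n. ((if i = l then [:0,1:] else 0) + [:- A $$ (i, l):]) * M $$ (l, j))" .
  then have "coeff ((char_poly_matrix A * M) $$ (i, j)) k =
      (\<Sum>l<n. (if i = l then (case k of 0 \<Rightarrow> 0 | Suc k' \<Rightarrow> coeff (M $$ (l, j)) k') else 0)
        - A $$ (i, l) * coeff (M $$ (l, j)) k)"
    by (simp only: coeff_sum entry)
  also have "\<dots> = (case k of 0 \<Rightarrow> 0 | Suc k' \<Rightarrow> coeff (M $$ (i, j)) k')
      - (\<Sum>l<n. A $$ (i, l) * coeff (M $$ (l, j)) k)"
    using ij by (simp add: sum_subtractf)
  also have "(\<Sum>l<n. A $$ (i, l) * coeff (M $$ (l, j)) k) = (A * coeff_mat M k) $$ (i, j)"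
    using A M ij by (simp add: scalar_prod_def coeff_mat_def atLeast0LessThan)
  finally show ?thesis
    using M ij by (simp add: coeff_mat_def split: nat.split)
qed

text \<open>Comparing coefficients in \<open>(t I - A) adj(t I - A) = \<chi>\<^sub>A(t) I\<close>.\<close>
lemma char_poly_adj_coeff_relations:
  fixes A :: "'a::comm_ring_1 mat"
  assumes A: "A \<in> carrier_mat n n"
  defines "C \<equiv> coeff_mat (adj_mat (char_poly_matrix A))"
  shows "coeff (char_poly A) 0 \<cdot>\<^sub>m 1\<^sub>m n + A * C 0 = 0\<^sub>m n n"
    and "C k = coeff (char_poly A) (Suc k) \<cdot>\<^sub>m 1\<^sub>m n + A * C (Suc k)"
proof -
  let ?M = "char_poly_matrix A" and ?c = "coeff (char_poly A)"
  have M: "?M \<in> carrier_mat n n" using A by simp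
  have Adj: "adj_mat ?M \<in> carrier_mat n n" using adj_mat(1)[OF M] by simp
  have C: "C k \<in> carrier_mat n n" for k using Adj by (simp add: C_def coeff_mat_def)
  have MA: "?M * adj_mat ?M = char_poly A \<cdot>\<^sub>m 1\<^sub>m n"
    using adj_mat(2)[OF M] by (simp add: char_poly_def)
  have key: "(case k of 0 \<Rightarrow> 0 | Suc k' \<Rightarrow> C k' $$ (i, j)) - (A * C k) $$ (i, j) =
      (if i = j then ?c k else 0)" if "i < n" "j < n" for i j k
  proof -
    have "coeff ((?M * adj_mat ?M) $$ (i, j)) k = (if i = j then ?c k else 0)"
      using that by (simp add: MA)
    then show ?thesis
      unfolding C_def using coeff_char_poly_matrix_mult[OF A Adj that, of k] by simp
  qed
  show "?c 0 \<cdot>\<^sub>m 1\<^sub>m n + A * C 0 = 0\<^sub>m n n"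
  proof (rule eq_matI)
    fix i j assume "i < dim_row (0\<^sub>m n n :: 'a mat)" "j < dim_col (0\<^sub>m n n :: 'a mat)"
    then have ij: "i < n" "j < n" by auto
    then show "(?c 0 \<cdot>\<^sub>m 1\<^sub>m n + A * C 0) $$ (i, j) = 0\<^sub>m n n $$ (i, j)"
      using key[OF ij, of 0] A C[of 0] by (simp split: if_splits, metis add.left_inverse)
  qed (use A C in auto)
  show "C k = ?c (Suc k) \<cdot>\<^sub>m 1\<^sub>m n + A * C (Suc k)"
  proof (rule eq_matI)
    fix i j assume "i < dim_row (?c (Suc k) \<cdot>\<^sub>m 1\<^sub>m n + A * C (Suc k))"
      "j < dim_col (?c (Suc k) \<cdot>\<^sub>m 1\<^sub>m n + A * C (Suc k))"
    then have ij: "i < n" "j < n" using A C[of "Suc k"] by auto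
    then show "C k $$ (i, j) = (?c (Suc k) \<cdot>\<^sub>m 1\<^sub>m n + A * C (Suc k)) $$ (i, j)"
      using key[OF ij, of "Suc k"] A C[of "Suc k"]
      by (simp split: if_splits, metis diff_add_cancel add.commute)
  qed (use A C[of k] C[of "Suc k"] in auto)
qed

lemma coeff_mat_eventually_zero:
  assumes M: "M \<in> carrier_mat n n"
  obtains D where "\<And>k. D < k \<Longrightarrow> coeff_mat M k = 0\<^sub>m n n"
proof
  let ?D = "\<Sum>i<n. \<Sum>j<n. degree (M $$ (i, j))"
  have deg_le: "degree (M $$ (i, j)) \<le> ?D" if "i < n" "j < n" for i j
  proof -
    have "degree (M $$ (i, j)) \<le> (\<Sum>j<n. degree (M $$ (i, j)))"
      using that by (intro member_le_sum) auto
    also have "\<dots> \<le> ?D"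
      using that by (intro member_le_sum[of i "{..<n}"]) auto
    finally show ?thesis .
  qed
  show "coeff_mat M k = 0\<^sub>m n n" if "?D < k" for k
    using M that by (intro eq_matI) (auto simp: coeff_mat_def intro!: coeff_eq_0 dest: deg_le)
qed

theorem cayley_hamilton:
  fixes A :: "'a::comm_ring_1 mat"
  assumes A: "A \<in> carrier_mat n n"
  shows "poly_mat (char_poly A) A = 0\<^sub>m n n"
proof -
  define C where "C = coeff_mat (adj_mat (char_poly_matrix A))"
  let ?c = "coeff (char_poly A)"
  note rel0 = char_poly_adj_coeff_relations(1)[OF A, folded C_def]
  note relS = char_poly_adj_coeff_relations(2)[OF A, folded C_def]
  have "adj_mat (char_poly_matrix A) \<in> carrier_mat n n"
    using adj_mat(1) A char_poly_matrix_closed by blast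
  then obtain D0 where D0: "\<And>k. D0 < k \<Longrightarrow> C k = 0\<^sub>m n n"
    unfolding C_def using coeff_mat_eventually_zero by metis
  define D where "D = D0 + degree (char_poly A)"
  have shift_beyond: "poly_shift (D + 2) (char_poly A) = 0"
    by (simp add: poly_eq_iff coeff_poly_shift D_def coeff_eq_0)
  have shift: "poly_mat (poly_shift j (char_poly A)) A = C (j - 1)" if "1 \<le> j" "j \<le> D + 2" for j
    using that(2,1)
  proof (induction j rule: inc_induct)
    case base
    then show ?case using A D0[of "Suc D"] shift_beyond by (simp add: D_def)
  next
    case (step j)
    have "poly_mat (poly_shift j (char_poly A)) A =
        ?c j \<cdot>\<^sub>m 1\<^sub>m n + A * poly_mat (poly_shift (Suc j) (char_poly A)) A"
      using A by (subst poly_shift_pCons) (simp add: poly_mat_pCons)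
    also have "\<dots> = C (j - 1)" using step relS[of "j - 1"] by simp
    finally show ?case .
  qed
  have "poly_mat (char_poly A) A = ?c 0 \<cdot>\<^sub>m 1\<^sub>m n + A * poly_mat (poly_shift 1 (char_poly A)) A"
    using A by (subst poly_shift_pCons[of 0, simplified]) (simp add: poly_mat_pCons)
  also have "\<dots> = 0\<^sub>m n n" using shift[of 1] rel0 by simp
  finally show ?thesis .
qed

text \<open>By Cayley--Hamilton, \<open>A\<close> times the polynomial \<open>(\<chi>\<^sub>A(t) - \<chi>\<^sub>A(0)) / t\<close> in \<open>A\<close> is
  \<open>-\<chi>\<^sub>A(0) I\<close>, and \<open>\<chi>\<^sub>A(0) = det (-A) \<noteq> 0\<close>.\<close>
lemma poly_mat_right_inverse:
  fixes A :: "'a::field mat"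
  assumes A: "A \<in> carrier_mat n n" and d: "det A \<noteq> 0"
  shows "\<exists>s. A * poly_mat s A = 1\<^sub>m n"
proof -
  define c0 where "c0 = coeff (char_poly A) 0"
  define P where "P = poly_mat (poly_shift 1 (char_poly A)) A"
  have P: "P \<in> carrier_mat n n" using A by (simp add: P_def)
  have "poly_mat (char_poly A) A = c0 \<cdot>\<^sub>m 1\<^sub>m n + A * P"
    using A unfolding P_def c0_def
    by (subst poly_shift_pCons[of 0, simplified]) (simp add: poly_mat_pCons)
  then have e: "c0 \<cdot>\<^sub>m 1\<^sub>m n + A * P = 0\<^sub>m n n" using cayley_hamilton[OF A] by simp
  have "c0 = poly (char_poly A) 0" by (simp add: c0_def poly_0_coeff_0)
  also have "\<dots> = det (- A)"
  proof -
    have "A + 0 \<cdot>\<^sub>m 1\<^sub>m n = A" using A by (intro eq_matI) auto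
    then show ?thesis using char_poly_matrix[OF A, of 0] A by (simp add: char_matrix_def)
  qed
  finally have c0: "c0 \<noteq> 0" using d det_0_negate[OF A] by simp
  have AP: "(A * P) $$ (i,j) = - (c0 * (if i = j then 1 else 0))" if "i<n" "j<n" for i j
  proof -
    have "(c0 \<cdot>\<^sub>m 1\<^sub>m n + A * P) $$ (i,j) = 0" using e that by simp
    then show ?thesis using that A P by (simp split: if_splits add: eq_neg_iff_add_eq_0 add.commute)
  qed
  have "A * poly_mat (Polynomial.smult (- 1 / c0) (poly_shift 1 (char_poly A))) A = 1\<^sub>m n"
  proof -
    have "A * poly_mat (Polynomial.smult (- 1 / c0) (poly_shift 1 (char_poly A))) A =
        (- 1 / c0) \<cdot>\<^sub>m (A * P)"
      unfolding P_def poly_mat_smult[OF A] by (rule mult_smult_distrib[OF A poly_mat_carrier[OF A]])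
    also have "\<dots> = 1\<^sub>m n"
      using A P AP c0 by (intro eq_matI) auto
    finally show ?thesis .
  qed
  then show ?thesis by blast
qed

lemma eigenvalue_uminus_mat:
  fixes A :: "'a::field mat"
  assumes A: "A \<in> carrier_mat n n" and ev: "eigenvalue (- A) a"
  shows "eigenvalue A (- a)"
proof -
  from ev obtain v where v: "v \<in> carrier_vec n" "v \<noteq> 0\<^sub>v n" "(- A) *\<^sub>v v = a \<cdot>\<^sub>v v"
    using A unfolding eigenvalue_def eigenvector_def by auto
  have "A *\<^sub>v v = (- a) \<cdot>\<^sub>v v"
  proof (rule eq_vecI)
    fix i assume "i < dim_vec ((- a) \<cdot>\<^sub>v v)"
    then have i: "i < n" using v by simp
    have "((- A) *\<^sub>v v) $ i = - ((A *\<^sub>v v) $ i)"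
      using A v(1) i by (simp add: scalar_prod_def sum_negf[symmetric])
    then show "(A *\<^sub>v v) $ i = ((- a) \<cdot>\<^sub>v v) $ i"
      using v(3) i v(1) by (metis index_smult_vec(1) carrier_vecD minus_minus mult_minus_left)
  qed (use A v in auto)
  then show ?thesis using v A unfolding eigenvalue_def eigenvector_def by auto
qed

lemma det_poly_mat_linear_factors_nonzero:
  fixes A :: "'a::field mat"
  assumes A: "A \<in> carrier_mat n n" and no_ev: "\<forall>a\<in>set as. \<not> eigenvalue A a"
  shows "det (poly_mat (\<Prod>a\<leftarrow>as. [:- a, 1:]) A) \<noteq> 0"
  using no_ev
proof (induction as)
  case Nil
  then show ?case using A by (simp add: poly_mat_one)
next
  case (Cons a as)
  have "poly_mat (\<Prod>a\<leftarrow>a # as. [:- a, 1:]) A = char_matrix A a * poly_mat (\<Prod>a\<leftarrow>as. [:- a, 1:]) A"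
    using A by (simp only: list.map prod_list.Cons poly_mat_mult[OF A] poly_mat_linear[OF A])
  then have "det (poly_mat (\<Prod>a\<leftarrow>a # as. [:- a, 1:]) A) =
      det (char_matrix A a) * det (poly_mat (\<Prod>a\<leftarrow>as. [:- a, 1:]) A)"
    using A by (simp add: det_mult[OF char_matrix_closed[OF A] poly_mat_carrier[OF A]])
  moreover have "det (char_matrix A a) \<noteq> 0" using Cons.prems eigenvalue_det[OF A] by auto
  ultimately show ?case using Cons by auto
qed

lemma det_poly_mat_char_poly_nonzero:
  fixes A B :: "complex mat"
  assumes A: "A \<in> carrier_mat n n" and B: "B \<in> carrier_mat n n"
    and disjoint: "\<And>\<mu>. eigenvalue A \<mu> \<Longrightarrow> \<not> eigenvalue B \<mu>"
  shows "det (poly_mat (char_poly B) A) \<noteq> 0"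
proof -
  obtain as where as: "char_poly B = (\<Prod>a\<leftarrow>as. [:- a, 1:])"
    using char_poly_factorized[OF B] by blast
  have "eigenvalue B a" if "a \<in> set as" for a
    using that eigenvalue_root_char_poly[OF B]
    by (simp add: as poly_prod_list prod_list_zero_iff)
  then show ?thesis
    unfolding as using disjoint by (intro det_poly_mat_linear_factors_nonzero[OF A]) auto
qed

section \<open>Endomorphisms of the tensor space as matrices\<close>

definition tidx_list :: "nat \<Rightarrow> nat \<Rightarrow> nat list list" where
  "tidx_list r m = List.n_lists r [0..<m]"

definition tdim :: "nat \<Rightarrow> nat \<Rightarrow> nat" where
  "tdim r m = length (tidx_list r m)"

lemma set_tidx_list: "set (tidx_list r m) = tidx r m"
  by (auto simp: tidx_list_def tidx_def set_n_lists)

lemma finite_tidx [simp]: "finite (tidx r m)"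
  by (metis set_tidx_list List.finite_set)

lemma tidx_list_nth_in: "i < tdim r m \<Longrightarrow> tidx_list r m ! i \<in> tidx r m"
  using set_tidx_list tdim_def by (metis nth_mem)

lemma tidx_list_nth_eq_iff:
  "i < tdim r m \<Longrightarrow> j < tdim r m \<Longrightarrow> tidx_list r m ! i = tidx_list r m ! j \<longleftrightarrow> i = j"
  using distinct_n_lists[of "[0..<m]" r] tdim_def
  by (metis distinct_upt nth_eq_iff_index_eq tidx_list_def)

lemma tidx_obtain_index:
  assumes "a \<in> tidx r m"
  obtains i where "i < tdim r m" "tidx_list r m ! i = a"
  using assms set_tidx_list tdim_def by (metis in_set_conv_nth)

lemma sum_tidx_conv_index: "(\<Sum>c\<in>tidx r m. f c) = (\<Sum>k<tdim r m. f (tidx_list r m ! k))"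
proof -
  have "bij_betw ((!) (tidx_list r m)) {..<tdim r m} (tidx r m)"
    using bij_betw_nth[of "tidx_list r m"] distinct_n_lists[of "[0..<m]" r]
    by (simp add: tidx_list_def tdim_def set_tidx_list[unfolded tidx_list_def] lessThan_def)
  then show ?thesis by (simp add: sum.reindex_bij_betw[symmetric])
qed

definition mat_of_tmat :: "nat \<Rightarrow> nat \<Rightarrow> 'a tmat \<Rightarrow> 'a mat" where
  "mat_of_tmat r m F =
     mat (tdim r m) (tdim r m) (\<lambda>(i, j). F (tidx_list r m ! i) (tidx_list r m ! j))"

lemma mat_of_tmat_carrier [simp]: "mat_of_tmat r m F \<in> carrier_mat (tdim r m) (tdim r m)"
  by (simp add: mat_of_tmat_def)

lemma mat_of_tmat_dim [simp]:
  "dim_row (mat_of_tmat r m F) = tdim r m" "dim_col (mat_of_tmat r m F) = tdim r m"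
  by (simp_all add: mat_of_tmat_def)

lemma mat_of_tmat_index [simp]:
  "i < tdim r m \<Longrightarrow> j < tdim r m \<Longrightarrow>
    mat_of_tmat r m F $$ (i, j) = F (tidx_list r m ! i) (tidx_list r m ! j)"
  by (simp add: mat_of_tmat_def)

lemma mat_of_tmat_tmul: "mat_of_tmat r m (tmul r m F G) = mat_of_tmat r m F * mat_of_tmat r m G"
  by (rule eq_matI) (auto simp: tmul_def sum_tidx_conv_index scalar_prod_def atLeast0LessThan)

lemma mat_of_tmat_tid: "mat_of_tmat r m (tid r m) = (1\<^sub>m (tdim r m) :: 'a::comm_ring_1 mat)"
  by (rule eq_matI) (auto simp: tid_def tidx_list_nth_eq_iff tidx_list_nth_in)

lemma mat_of_tmat_add:
  "mat_of_tmat r m (\<lambda>a b. F a b + G a b) = mat_of_tmat r m F + mat_of_tmat r m G"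
  by (rule eq_matI) auto

lemma mat_of_tmat_smult: "mat_of_tmat r m (\<lambda>a b. c * F a b) = c \<cdot>\<^sub>m mat_of_tmat r m F"
  by (rule eq_matI) auto

lemma mat_of_tmat_zero: "mat_of_tmat r m (\<lambda>a b. 0) = 0\<^sub>m (tdim r m) (tdim r m)"
  by (rule eq_matI) auto

lemma mat_of_tmat_inj:
  assumes "tsupp r m F" "tsupp r m G" "mat_of_tmat r m F = mat_of_tmat r m G"
  shows "F = G"
proof (intro ext)
  fix a b
  show "F a b = G a b"
  proof (cases "a \<in> tidx r m \<and> b \<in> tidx r m")
    case True
    then obtain i j where "i < tdim r m" "j < tdim r m"
      "tidx_list r m ! i = a" "tidx_list r m ! j = b"
      by (meson tidx_obtain_index)
    then show ?thesis using assms(3) mat_of_tmat_index by metis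
  next
    case False
    then show ?thesis using assms(1,2) by (auto simp: tsupp_def)
  qed
qed

lemma eigenvalue_mat_of_tmat_obtain_eigenfunction:
  fixes F :: "'a::field tmat"
  assumes "eigenvalue (mat_of_tmat r m F) \<mu>"
  obtains f a0 where "a0 \<in> tidx r m" "f a0 \<noteq> 0"
    "\<And>a. a \<in> tidx r m \<Longrightarrow> (\<Sum>b\<in>tidx r m. F a b * f b) = \<mu> * f a"
proof -
  let ?N = "tdim r m" and ?L = "tidx_list r m"
  from assms obtain v where v: "v \<in> carrier_vec ?N" "v \<noteq> 0\<^sub>v ?N"
    "mat_of_tmat r m F *\<^sub>v v = \<mu> \<cdot>\<^sub>v v"
    unfolding eigenvalue_def eigenvector_def by auto
  define f where "f b = (\<Sum>i<?N. if ?L ! i = b then v $ i else 0)" for b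
  have f: "f (?L ! j) = v $ j" if "j < ?N" for j
  proof -
    have "f (?L ! j) = (\<Sum>i<?N. if i = j then v $ i else 0)"
      unfolding f_def by (intro sum.cong refl) (use that tidx_list_nth_eq_iff in auto)
    then show ?thesis using that by simp
  qed
  obtain j where j: "j < ?N" "v $ j \<noteq> 0"
    using v(1,2) by (metis carrier_vecD eq_vecI index_zero_vec(1) index_zero_vec(2))
  moreover have "(\<Sum>b\<in>tidx r m. F a b * f b) = \<mu> * f a" if a: "a \<in> tidx r m" for a
  proof -
    obtain i where i: "i < ?N" "?L ! i = a" using tidx_obtain_index[OF a] by metis
    have "(\<Sum>b\<in>tidx r m. F a b * f b) = (mat_of_tmat r m F *\<^sub>v v) $ i"
      using v(1) i by (simp add: sum_tidx_conv_index scalar_prod_def f lessThan_atLeast0)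
    also have "\<dots> = \<mu> * f a" using v(1,3) i f[OF i(1)] by simp
    finally show ?thesis .
  qed
  ultimately show ?thesis using that[of "?L ! j"] f tidx_list_nth_in by metis
qed

lemma (in comm_ring_hom) map_mat_mat_of_tmat:
  "map_mat hom (mat_of_tmat r m F) = mat_of_tmat r m (\<lambda>a b. hom (F a b))"
  by (rule eq_matI) auto

lemma tsupp_tid: "tsupp r m (tid r m)"
  by (simp add: tsupp_def tid_def)

lemma tsupp_zero: "tsupp r m (\<lambda>a b. 0)"
  by (simp add: tsupp_def)

lemma tsupp_pi_r: "tsupp r m (pi_r r m q e)"
  by (induction e) (auto simp: tsupp_def tid_def tmul_def Tmat_def)

lemma tmul_scalar_tid:
  "tmul r m (\<lambda>a b. c * tid r m a b) F a b = (if a \<in> tidx r m then c * F a b else 0)"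
proof -
  have "tmul r m (\<lambda>a b. c * tid r m a b) F a b =
      (\<Sum>x\<in>tidx r m. if a = x then (if a \<in> tidx r m then c * F x b else 0) else 0)"
    unfolding tmul_def by (intro sum.cong) (auto simp: tid_def)
  also have "\<dots> = (if a \<in> tidx r m then c * F a b else 0)" by (simp add: sum.delta)
  finally show ?thesis .
qed

lemma tmul_tid_left: "tsupp r m F \<Longrightarrow> tmul r m (tid r m) F = (F :: 'a::comm_ring_1 tmat)"
  using tmul_scalar_tid[of r m 1 F] by (intro ext) (auto simp: tsupp_def)

lemma tmul_zero_left: "tmul r m (\<lambda>a b. 0) F = (\<lambda>a b. 0)"
  by (simp add: tmul_def)

section \<open>A separating element of the Hecke algebra\<close>

lemma heq_neg_neg: "heq r q (HMul (HC (-1)) (HMul (HC (-1)) a)) a"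
proof -
  have "heq r q (HMul (HC (-1)) (HMul (HC (-1)) a)) (HMul (HMul (HC (-1)) (HC (-1))) a)"
    by (rule heq.h_sym, rule heq.h_mul_assoc)
  moreover have "heq r q (HMul (HMul (HC (-1)) (HC (-1))) a) (HMul (HC ((-1) * (-1))) a)"
    by (rule heq.h_mul_cong, rule heq.h_const_mul, rule heq.h_refl)
  moreover have "heq r q (HMul (HC ((-1) * (-1))) a) a"
    using heq.h_mul_one_l[of r q a] by simp
  ultimately show ?thesis by (meson heq.h_trans)
qed

lemma heq_sub_sub: "heq r q (HAdd (HC d) (HMul (HC (-1)) (HAdd (HC d) (HMul (HC (-1)) a)))) a"
proof -
  have "heq r q (HMul (HC (-1)) (HAdd (HC d) (HMul (HC (-1)) a))) (HAdd (HC (-d)) a)"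
  proof -
    have "heq r q (HMul (HC (-1)) (HAdd (HC d) (HMul (HC (-1)) a)))
        (HAdd (HMul (HC (-1)) (HC d)) (HMul (HC (-1)) (HMul (HC (-1)) a)))"
      by (rule heq.h_distrib_l)
    moreover have "heq r q (HAdd (HMul (HC (-1)) (HC d)) (HMul (HC (-1)) (HMul (HC (-1)) a)))
        (HAdd (HC ((-1) * d)) a)"
      by (rule heq.h_add_cong, rule heq.h_const_mul, rule heq_neg_neg)
    ultimately show ?thesis by (simp, meson heq.h_trans)
  qed
  then have "heq r q (HAdd (HC d) (HMul (HC (-1)) (HAdd (HC d) (HMul (HC (-1)) a))))
      (HAdd (HC d) (HAdd (HC (-d)) a))"
    by (rule heq.h_add_cong[OF heq.h_refl])
  moreover have "heq r q (HAdd (HC d) (HAdd (HC (-d)) a)) (HAdd (HAdd (HC d) (HC (-d))) a)"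
    by (rule heq.h_sym, rule heq.h_add_assoc)
  moreover have "heq r q (HAdd (HAdd (HC d) (HC (-d))) a) (HAdd (HC (d + - d)) a)"
    by (rule heq.h_add_cong, rule heq.h_const_add, rule heq.h_refl)
  moreover have "heq r q (HAdd (HC (d + - d)) a) (HAdd a (HC 0))"
    using heq.h_add_comm[of r q "HC 0" a] by simp
  moreover have "heq r q (HAdd a (HC 0)) a" by (rule heq.h_add_zero)
  ultimately show ?thesis by (meson heq.h_trans)
qed

lemma heq_goldman_goldman: "heq r q (goldman r q (goldman r q e)) e"
  by (induction e) (auto intro: heq.h_refl heq_sub_sub heq.h_add_cong heq.h_mul_cong)

definition hexp_poly :: "'k::zero poly \<Rightarrow> 'k hexp \<Rightarrow> 'k hexp" where
  "hexp_poly p e = foldr (\<lambda>a acc. HAdd (HC a) (HMul e acc)) (coeffs p) (HC 0)"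

lemma goldman_hexp_poly: "goldman r q (hexp_poly p e) = hexp_poly p (goldman r q e)"
proof -
  have "goldman r q (foldr (\<lambda>a acc. HAdd (HC a) (HMul e acc)) xs (HC 0)) =
      foldr (\<lambda>a acc. HAdd (HC a) (HMul (goldman r q e) acc)) xs (HC 0)" for xs
    by (induction xs) auto
  then show ?thesis by (simp add: hexp_poly_def)
qed

lemma mat_of_tmat_pi_hexp_poly:
  fixes q :: "'k::field"
  shows "mat_of_tmat r m (pi_r r m q (hexp_poly p e)) = poly_mat p (mat_of_tmat r m (pi_r r m q e))"
proof -
  have "mat_of_tmat r m (pi_r r m q (foldr (\<lambda>a acc. HAdd (HC a) (HMul e acc)) xs (HC 0))) =
      foldr (\<lambda>a B. a \<cdot>\<^sub>m 1\<^sub>m (tdim r m) + mat_of_tmat r m (pi_r r m q e) * B) xs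
        (0\<^sub>m (tdim r m) (tdim r m))" for xs
    by (induction xs)
      (simp_all add: mat_of_tmat_zero[symmetric] mat_of_tmat_add mat_of_tmat_smult
        mat_of_tmat_tid mat_of_tmat_tmul)
  then show ?thesis by (simp add: hexp_poly_def poly_mat_def)
qed

text \<open>For \<open>\<chi>\<close> the characteristic polynomial of \<open>\<pi>(goldman Z)\<close>, Cayley--Hamilton gives
  \<open>\<pi>(goldman (\<chi>(Z))) = 0\<close>, while \<open>\<pi>(\<chi>(Z))\<close> is invertible with a polynomial inverse.\<close>
lemma separating_element_exists:
  fixes q :: "'k::field"
  assumes "det (poly_mat (char_poly (mat_of_tmat r m (pi_r r m q (goldman r q Z))))
      (mat_of_tmat r m (pi_r r m q Z))) \<noteq> 0"
  obtains E where "pi_r r m q E = tid r m" "pi_r r m q (goldman r q E) = (\<lambda>a b. 0)"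
proof -
  let ?N = "tdim r m"
  define \<chi> where "\<chi> = char_poly (mat_of_tmat r m (pi_r r m q (goldman r q Z)))"
  define W where "W = poly_mat \<chi> (mat_of_tmat r m (pi_r r m q Z))"
  obtain s where s: "W * poly_mat s W = 1\<^sub>m ?N"
    using poly_mat_right_inverse[of W ?N] assms by (auto simp: W_def \<chi>_def)
  define E where "E = HMul (hexp_poly \<chi> Z) (hexp_poly s (hexp_poly \<chi> Z))"
  have "mat_of_tmat r m (pi_r r m q E) = mat_of_tmat r m (tid r m)"
    using s by (simp add: E_def mat_of_tmat_tmul mat_of_tmat_pi_hexp_poly W_def mat_of_tmat_tid)
  then have "pi_r r m q E = tid r m"
    by (rule mat_of_tmat_inj[OF tsupp_pi_r tsupp_tid])
  moreover have "mat_of_tmat r m (pi_r r m q (goldman r q E)) = mat_of_tmat r m (\<lambda>a b. 0)"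
    using cayley_hamilton[of "mat_of_tmat r m (pi_r r m q (goldman r q Z))" ?N]
    by (simp add: E_def mat_of_tmat_tmul mat_of_tmat_pi_hexp_poly goldman_hexp_poly
        \<chi>_def mat_of_tmat_zero)
  then have "pi_r r m q (goldman r q E) = (\<lambda>a b. 0)"
    by (rule mat_of_tmat_inj[OF tsupp_pi_r tsupp_zero])
  ultimately show ?thesis by (rule that)
qed

text \<open>\<open>E X + goldman (E X)\<close> is Goldman-fixed and has the same image as \<open>X\<close> under \<open>\<pi>\<close>.\<close>
lemma A_q_subset_C_q:
  assumes E: "pi_r r m q E = tid r m" and gE: "pi_r r m q (goldman r q E) = (\<lambda>a b. 0)"
  shows "A_q r m q \<subseteq> C_q r m q"
proof
  fix F assume "F \<in> A_q r m q"
  then obtain X where X: "F = pi_r r m q X" by (auto simp: A_q_def)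
  define Y where "Y = HAdd (HMul E X) (HMul (goldman r q E) (goldman r q X))"
  have "pi_r r m q Y = F"
    by (simp add: X Y_def E gE tmul_tid_left[OF tsupp_pi_r] tmul_zero_left)
  moreover have "heq r q (goldman r q Y) Y"
  proof -
    have "heq r q (goldman r q Y) (HAdd (HMul (goldman r q E) (goldman r q X)) (HMul E X))"
      by (simp add: Y_def heq.h_add_cong heq.h_mul_cong heq_goldman_goldman heq.h_refl)
    then show ?thesis unfolding Y_def by (meson heq.h_add_comm heq.h_trans)
  qed
  ultimately show "F \<in> C_q r m q" unfolding C_q_def by blast
qed

lemma C_q_subset_A_q: "C_q r m q \<subseteq> A_q r m q"
  by (auto simp: A_q_def C_q_def)

section \<open>The sum over transpositions\<close>

lemma length_swap_at [simp]: "length (swap_at i b) = length b"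
  by (simp add: swap_at_def)

lemma swap_at_tidx: "1 \<le> i \<Longrightarrow> i < r \<Longrightarrow> b \<in> tidx r m \<Longrightarrow> swap_at i b \<in> tidx r m"
  unfolding tidx_def swap_at_def by (auto simp: set_swap)

lemma set_swap_at: "1 \<le> i \<Longrightarrow> i < length b \<Longrightarrow> set (swap_at i b) = set b"
  unfolding swap_at_def by (simp add: set_swap)

lemma swap_at_eq_iff: "1 \<le> i \<Longrightarrow> i < length b \<Longrightarrow> swap_at i b = b \<longleftrightarrow> b!(i-1) = b!i"
  unfolding swap_at_def
  by (metis (no_types, lifting) diff_less le_eq_less_or_eq less_imp_diff_less list_update_id
      list_update_overwrite nth_list_update_eq zero_less_one list_update_swap
      less_numeral_extra(3) nat_neq_iff)

lemma eq_swap_at_iff: "1 \<le> i \<Longrightarrow> i < length b \<Longrightarrow> b = swap_at i b \<longleftrightarrow> b!(i-1) = b!i"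
  using swap_at_eq_iff by metis

definition swap_pos :: "nat \<Rightarrow> nat \<Rightarrow> nat list \<Rightarrow> nat list" where
  "swap_pos k l b = b[k := b!l, l := b!k]"

definition word_action :: "nat list \<Rightarrow> nat list \<Rightarrow> nat list" where
  "word_action w = foldr (\<lambda>i f. swap_at i \<circ> f) w id"

lemma word_action_append: "word_action (xs @ ys) = word_action xs \<circ> word_action ys"
  unfolding word_action_def by (induction xs) auto

lemma word_action_tidx:
  "(\<And>i. i \<in> set w \<Longrightarrow> 1 \<le> i \<and> i < r) \<Longrightarrow> b \<in> tidx r m \<Longrightarrow> word_action w b \<in> tidx r m"
  unfolding word_action_def by (induction w) (auto intro: swap_at_tidx)

text \<open>The word \<open>s\<^sub>l s\<^sub>l\<^sub>-\<^sub>1 \<dots> s\<^sub>k\<^sub>+\<^sub>1 \<dots> s\<^sub>l\<^sub>-\<^sub>1 s\<^sub>l\<close>; since \<open>s\<^sub>i\<close> swaps the list positions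
  \<open>i - 1\<close> and \<open>i\<close>, it acts as the transposition of the positions \<open>k < l\<close>.\<close>
function transp_word :: "nat \<Rightarrow> nat \<Rightarrow> nat list" where
  "transp_word k l = (if l \<le> Suc k then [l] else l # transp_word k (l - 1) @ [l])"
  by auto
termination by (relation "measure (\<lambda>(k, l). l)") auto

declare transp_word.simps [simp del]

lemma set_transp_word: "k < l \<Longrightarrow> i \<in> set (transp_word k l) \<Longrightarrow> Suc k \<le> i \<and> i \<le> l"
proof (induction k l rule: transp_word.induct)
  case (1 k l)
  show ?case
  proof (cases "l \<le> Suc k")
    case True
    then show ?thesis using 1 by (simp add: transp_word.simps)
  next
    case False
    then have "i = l \<or> i \<in> set (transp_word k (l - 1))"
      using 1(3) by (simp add: transp_word.simps)
    moreover have "k < l - 1" using False by arith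
    ultimately show ?thesis using 1(1)[OF False] False by auto
  qed
qed

lemma odd_length_transp_word: "odd (length (transp_word k l))"
proof (induction k l rule: transp_word.induct)
  case (1 k l)
  then show ?case by (cases "l \<le> Suc k") (simp_all add: transp_word.simps)
qed

lemma word_action_transp_word:
  "k < l \<Longrightarrow> l < length b \<Longrightarrow> word_action (transp_word k l) b = swap_pos k l b"
proof (induction k l arbitrary: b rule: transp_word.induct)
  case (1 k l)
  show ?case
  proof (cases "l \<le> Suc k")
    case True
    then have "l = Suc k" using 1 by simp
    then show ?thesis by (simp add: transp_word.simps word_action_def swap_at_def swap_pos_def)
  next
    case False
    have word: "transp_word k l = [l] @ transp_word k (l - 1) @ [l]"
      using False by (simp add: transp_word.simps)
    have "word_action (transp_word k l) b =
        swap_at l (word_action (transp_word k (l-1)) (swap_at l b))"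
      unfolding word word_action_append by (simp add: word_action_def)
    also have "\<dots> = swap_at l (swap_pos k (l-1) (swap_at l b))"
      using 1 False by simp
    also have "\<dots> = swap_pos k l b"
      using 1(2,3) False
      by (intro nth_equalityI) (auto simp: swap_at_def swap_pos_def nth_list_update)
    finally show ?thesis .
  qed
qed

definition perm_tmat :: "nat \<Rightarrow> nat \<Rightarrow> (nat list \<Rightarrow> nat list) \<Rightarrow> 'a::comm_ring_1 tmat" where
  "perm_tmat r m f = (\<lambda>a b. if a \<in> tidx r m \<and> b \<in> tidx r m \<and> a = f b then 1 else 0)"

lemma perm_tmat_cong: "(\<And>b. b \<in> tidx r m \<Longrightarrow> f b = g b) \<Longrightarrow> perm_tmat r m f = perm_tmat r m g"
  unfolding perm_tmat_def by (intro ext) auto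

lemma tid_eq_perm_tmat: "tid r m = perm_tmat r m (\<lambda>x. x)"
  by (intro ext) (auto simp: tid_def perm_tmat_def)

lemma tmul_perm_tmat:
  fixes x y :: "'a::comm_ring_1"
  assumes g: "\<And>b. b \<in> tidx r m \<Longrightarrow> g b \<in> tidx r m"
  shows "tmul r m (\<lambda>a b. x * perm_tmat r m f a b) (\<lambda>a b. y * perm_tmat r m g a b) =
    (\<lambda>a b. (x * y) * perm_tmat r m (f \<circ> g) a b)"
proof (intro ext)
  fix a b
  have "tmul r m (\<lambda>a b. x * perm_tmat r m f a b) (\<lambda>a b. y * perm_tmat r m g a b) a b =
      (\<Sum>c\<in>tidx r m. (if c = g b \<and> b \<in> tidx r m then x * y * perm_tmat r m f a c else 0))"
    unfolding tmul_def by (intro sum.cong) (auto simp: perm_tmat_def)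
  also have "\<dots> = (x * y) * perm_tmat r m (f \<circ> g) a b"
  proof (cases "b \<in> tidx r m")
    case True
    have "(\<Sum>c\<in>tidx r m. (if c = g b \<and> b \<in> tidx r m then x * y * perm_tmat r m f a c else 0)) =
        (\<Sum>c\<in>tidx r m. (if c = g b then x * y * perm_tmat r m f a c else 0))"
      using True by simp
    also have "\<dots> = x * y * perm_tmat r m f a (g b)" using g[OF True] by (simp add: sum.delta')
    finally show ?thesis using True g[OF True] by (simp add: perm_tmat_def)
  next
    case False
    then show ?thesis by (simp add: perm_tmat_def)
  qed
  finally show "tmul r m (\<lambda>a b. x * perm_tmat r m f a b) (\<lambda>a b. y * perm_tmat r m g a b) a b =
      (x * y) * perm_tmat r m (f \<circ> g) a b" .
qed

definition tmat_word :: "nat \<Rightarrow> nat \<Rightarrow> (nat \<Rightarrow> 'a::comm_ring_1 tmat) \<Rightarrow> nat list \<Rightarrow> 'a tmat" where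
  "tmat_word r m T w = foldr (\<lambda>i M. tmul r m (T i) M) w (tid r m)"

lemma tmat_word_cong:
  "(\<And>i. i \<in> set w \<Longrightarrow> T i = T' i) \<Longrightarrow> tmat_word r m T w = tmat_word r m T' w"
  unfolding tmat_word_def by (induction w) auto

lemma tmat_word_perm:
  fixes s :: "'a::comm_ring_1"
  assumes "\<And>i. i \<in> set w \<Longrightarrow> 1 \<le> i \<and> i < r"
    and "\<And>i. 1 \<le> i \<Longrightarrow> i < r \<Longrightarrow> T i = (\<lambda>a b. s * perm_tmat r m (swap_at i) a b)"
  shows "tmat_word r m T w = (\<lambda>a b. s ^ length w * perm_tmat r m (word_action w) a b)"
  using assms(1)
proof (induction w)
  case Nil
  then show ?case by (simp add: tmat_word_def tid_eq_perm_tmat word_action_def id_def)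
next
  case (Cons i w)
  have "tmat_word r m T (i # w) =
      tmul r m (\<lambda>a b. s * perm_tmat r m (swap_at i) a b)
        (\<lambda>a b. s ^ length w * perm_tmat r m (word_action w) a b)"
    using Cons assms(2) by (simp add: tmat_word_def)
  also have "\<dots> = (\<lambda>a b. (s * s ^ length w) * perm_tmat r m (swap_at i \<circ> word_action w) a b)"
    by (rule tmul_perm_tmat) (use Cons.prems word_action_tidx in auto)
  finally show ?case by (simp add: word_action_def comp_def)
qed

definition transp_pairs :: "nat \<Rightarrow> (nat \<times> nat) list" where
  "transp_pairs r = concat (map (\<lambda>l. map (\<lambda>k. (k, l)) [0..<l]) [0..<r])"

lemma set_transp_pairs: "set (transp_pairs r) = {(k, l). k < l \<and> l < r}"
  by (auto simp: transp_pairs_def)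

lemma distinct_transp_pairs: "distinct (transp_pairs r)"
  unfolding transp_pairs_def by (induction r) (auto simp: distinct_map inj_on_def)

definition transp_sum :: "nat \<Rightarrow> nat \<Rightarrow> (nat \<Rightarrow> 'a::comm_ring_1 tmat) \<Rightarrow> 'a tmat" where
  "transp_sum r m T =
     (\<lambda>a b. \<Sum>p\<leftarrow>transp_pairs r. tmat_word r m T (transp_word (fst p) (snd p)) a b)"

lemma transp_sum_eq_sum:
  "transp_sum r m T =
    (\<lambda>a b. \<Sum>p\<in>set (transp_pairs r). tmat_word r m T (transp_word (fst p) (snd p)) a b)"
  by (simp add: transp_sum_def sum_list_distinct_conv_sum_set[OF distinct_transp_pairs])

lemma transp_sum_cong:
  assumes "\<And>i. 1 \<le> i \<Longrightarrow> i < r \<Longrightarrow> T i = T' i"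
  shows "transp_sum r m T = transp_sum r m T'"
proof -
  have "tmat_word r m T (transp_word (fst p) (snd p)) =
      tmat_word r m T' (transp_word (fst p) (snd p))"
    if "p \<in> set (transp_pairs r)" for p
  proof (rule tmat_word_cong)
    fix i assume "i \<in> set (transp_word (fst p) (snd p))"
    then show "T i = T' i"
      using that set_transp_word[of "fst p" "snd p" i] assms by (auto simp: set_transp_pairs)
  qed
  then show ?thesis
    unfolding transp_sum_def by (intro ext arg_cong[where f=sum_list] map_cong) auto
qed

definition swap_sum_tmat :: "nat \<Rightarrow> nat \<Rightarrow> 'a::comm_ring_1 tmat" where
  "swap_sum_tmat r m =
     (\<lambda>a b. \<Sum>p\<in>set (transp_pairs r). perm_tmat r m (swap_pos (fst p) (snd p)) a b)"

text \<open>The factor \<open>q\<close> clears the denominator of \<open>q - q\<^sup>-\<^sup>1\<close>,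
  so the entries are polynomials in \<open>q\<close> and can be specialised at \<open>q = 1\<close>.\<close>
definition qT_tmat :: "nat \<Rightarrow> nat \<Rightarrow> 'a::comm_ring_1 \<Rightarrow> nat \<Rightarrow> 'a tmat" where
  "qT_tmat r m t i = (\<lambda>a b. if a \<in> tidx r m \<and> b \<in> tidx r m then
     (if b!(i-1) = b!i then (if a = b then t*t else 0)
      else if b!(i-1) < b!i
        then (if a = swap_at i b then t else 0) + (if a = b then t*t - 1 else 0)
      else (if a = swap_at i b then t else 0)) else 0)"

definition qT_goldman_tmat :: "nat \<Rightarrow> nat \<Rightarrow> 'a::comm_ring_1 \<Rightarrow> nat \<Rightarrow> 'a tmat" where
  "qT_goldman_tmat r m t i = (\<lambda>a b. if a \<in> tidx r m \<and> b \<in> tidx r m then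
     (if b!(i-1) = b!i then (if a = b then -1 else 0)
      else if b!(i-1) < b!i then (if a = swap_at i b then -t else 0)
      else (if a = swap_at i b then -t else 0) + (if a = b then t*t - 1 else 0)) else 0)"

lemma qT_tmat_one:
  "1 \<le> i \<Longrightarrow> i < r \<Longrightarrow>
    qT_tmat r m (1::'a::comm_ring_1) i = (\<lambda>a b. 1 * perm_tmat r m (swap_at i) a b)"
  unfolding qT_tmat_def perm_tmat_def
  by (intro ext) (auto simp: swap_at_eq_iff eq_swap_at_iff tidx_def set_swap_at)

lemma qT_goldman_tmat_one:
  "1 \<le> i \<Longrightarrow> i < r \<Longrightarrow>
    qT_goldman_tmat r m (1::'a::comm_ring_1) i = (\<lambda>a b. (-1) * perm_tmat r m (swap_at i) a b)"
  unfolding qT_goldman_tmat_def perm_tmat_def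
  by (intro ext) (auto simp: swap_at_eq_iff eq_swap_at_iff tidx_def set_swap_at)

lemma tmat_word_transp_word_one:
  assumes kl: "k < l" "l < r"
  shows "tmat_word r m (qT_tmat r m (1::'a::comm_ring_1)) (transp_word k l) =
      perm_tmat r m (swap_pos k l)"
    and "tmat_word r m (qT_goldman_tmat r m (1::'a)) (transp_word k l) =
      (\<lambda>a b. - perm_tmat r m (swap_pos k l) a b)"
proof -
  have word: "1 \<le> i \<and> i < r" if "i \<in> set (transp_word k l)" for i
    using set_transp_word[OF kl(1) that] kl by auto
  have action:
    "perm_tmat r m (word_action (transp_word k l)) = (perm_tmat r m (swap_pos k l) :: 'a tmat)"
    by (rule perm_tmat_cong) (use kl word_action_transp_word in \<open>auto simp: tidx_def\<close>)
  show "tmat_word r m (qT_tmat r m (1::'a)) (transp_word k l) = perm_tmat r m (swap_pos k l)"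
    using tmat_word_perm[where w="transp_word k l" and T="qT_tmat r m (1::'a)" and s=1,
        OF word qT_tmat_one]
      action by simp
  show "tmat_word r m (qT_goldman_tmat r m (1::'a)) (transp_word k l) =
      (\<lambda>a b. - perm_tmat r m (swap_pos k l) a b)"
    using tmat_word_perm[where w="transp_word k l" and T="qT_goldman_tmat r m (1::'a)" and s="-1",
        OF word qT_goldman_tmat_one] action odd_length_transp_word[of k l]
    by (simp add: neg_one_odd_power)
qed

lemma transp_sum_qT_one: "transp_sum r m (qT_tmat r m (1::'a::comm_ring_1)) = swap_sum_tmat r m"
  unfolding transp_sum_eq_sum swap_sum_tmat_def
  by (intro ext sum.cong refl) (auto simp: set_transp_pairs tmat_word_transp_word_one(1))

lemma transp_sum_qT_goldman_one:
  "transp_sum r m (qT_goldman_tmat r m (1::'a::comm_ring_1)) = (\<lambda>a b. - swap_sum_tmat r m a b)"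
  unfolding transp_sum_eq_sum swap_sum_tmat_def sum_negf[symmetric]
  by (intro ext sum.cong refl) (auto simp: set_transp_pairs tmat_word_transp_word_one(2))

context comm_ring_hom
begin

lemma tmul_hom: "hom (tmul r m F G a b) = tmul r m (\<lambda>x y. hom (F x y)) (\<lambda>x y. hom (G x y)) a b"
  by (simp add: tmul_def hom_distribs)

lemma tid_hom: "hom (tid r m a b) = tid r m a b"
  by (auto simp: tid_def)

lemma qT_tmat_hom: "hom (qT_tmat r m t i a b) = qT_tmat r m (hom t) i a b"
  unfolding qT_tmat_def if_distrib[of hom] by (simp add: hom_distribs)

lemma qT_goldman_tmat_hom: "hom (qT_goldman_tmat r m t i a b) = qT_goldman_tmat r m (hom t) i a b"
  unfolding qT_goldman_tmat_def if_distrib[of hom] by (simp add: hom_distribs)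

lemma tmat_word_hom: "hom (tmat_word r m T w a b) = tmat_word r m (\<lambda>i x y. hom (T i x y)) w a b"
proof (induction w arbitrary: a b)
  case Nil
  then show ?case by (simp add: tmat_word_def tid_hom)
next
  case (Cons i w)
  then show ?case by (simp add: tmat_word_def tmul_hom)
qed

lemma transp_sum_hom: "hom (transp_sum r m T a b) = transp_sum r m (\<lambda>i x y. hom (T i x y)) a b"
  by (simp add: transp_sum_def hom_sum_list o_def tmat_word_hom)

end

definition transp_sum_det :: "nat \<Rightarrow> nat \<Rightarrow> 'a::comm_ring_1 \<Rightarrow> 'a" where
  "transp_sum_det r m t =
     det (poly_mat (char_poly (mat_of_tmat r m (transp_sum r m (qT_goldman_tmat r m t))))
       (mat_of_tmat r m (transp_sum r m (qT_tmat r m t))))"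

lemma (in comm_ring_hom) hom_transp_sum_det:
  "hom (transp_sum_det r m t) = transp_sum_det r m (hom t)"
proof -
  let ?X = "mat_of_tmat r m (transp_sum r m (qT_tmat r m t))"
    and ?Y = "mat_of_tmat r m (transp_sum r m (qT_goldman_tmat r m t))"
  have X: "?X \<in> carrier_mat (tdim r m) (tdim r m)" and Y: "?Y \<in> carrier_mat (tdim r m) (tdim r m)"
    by auto
  have "hom (det (poly_mat (char_poly ?Y) ?X)) =
      det (poly_mat (char_poly (map_mat hom ?Y)) (map_mat hom ?X))"
    by (simp flip: hom_det add: map_mat_poly_mat[OF X] char_poly_hom[OF Y])
  then show ?thesis
    by (simp add: transp_sum_det_def map_mat_mat_of_tmat transp_sum_hom qT_tmat_hom
        qT_goldman_tmat_hom)
qed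

lemma comm_ring_hom_eval_rat_poly:
  "comm_ring_hom (\<lambda>p::rat poly. poly (map_poly (of_rat :: rat \<Rightarrow> 'k::field_char_0) p) x)"
proof -
  interpret map_poly_comm_ring_hom "of_rat :: rat \<Rightarrow> 'k" ..
  show ?thesis by unfold_locales (simp_all add: hom_add hom_mult)
qed

lemma swap_at_neq: "1 \<le> i \<Longrightarrow> i < length b \<Longrightarrow> b!(i-1) \<noteq> b!i \<Longrightarrow> swap_at i b \<noteq> b"
  using swap_at_eq_iff by metis

lemma pi_qT_entry:
  fixes q :: "'k::field"
  shows "pi_r r m q (HMul (HC q) (HT i)) a b =
    (if a \<in> tidx r m then q * pi_r r m q (HT i) a b else 0)"
  by (simp only: pi_r.simps tmul_scalar_tid)

lemma pi_qT_goldman_entry: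
  fixes q :: "'k::field"
  assumes i: "1 \<le> i" "i < r"
  shows "pi_r r m q (HMul (HC q) (goldman r q (HT i))) a b =
     (if a \<in> tidx r m then q * ((q - inverse q) * tid r m a b - Tmat r m q i a b) else 0)"
proof -
  have "pi_r r m q (goldman r q (HT i)) a b =
      (q - inverse q) * tid r m a b + tmul r m (\<lambda>a b. (-1) * tid r m a b) (Tmat r m q i) a b"
    using i by simp
  also have "\<dots> = (q - inverse q) * tid r m a b - Tmat r m q i a b"
    by (simp only: tmul_scalar_tid) (auto simp: Tmat_def tid_def)
  finally show ?thesis by (simp only: pi_r.simps tmul_scalar_tid)
qed

lemma pi_qT:
  fixes q :: "'k::field"
  assumes q: "q \<noteq> 0" and i: "1 \<le> i" "i < r"
  shows "pi_r r m q (HMul (HC q) (HT i)) = qT_tmat r m q i"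
proof (intro ext)
  fix a b
  show "pi_r r m q (HMul (HC q) (HT i)) a b = qT_tmat r m q i a b"
  proof (cases "a \<in> tidx r m \<and> b \<in> tidx r m")
    case True
    then have lb: "i < length b" using i by (simp add: tidx_def)
    have "q * (q - inverse q) = q * q - 1" using q by (simp add: field_simps)
    then show ?thesis using True i q swap_at_neq[OF i(1) lb] unfolding pi_qT_entry
      by (auto simp: Tmat_def qT_tmat_def Let_def algebra_simps)
  next
    case False
    then show ?thesis unfolding pi_qT_entry using i by (auto simp: Tmat_def qT_tmat_def)
  qed
qed

lemma pi_qT_goldman:
  fixes q :: "'k::field"
  assumes q: "q \<noteq> 0" and i: "1 \<le> i" "i < r"
  shows "pi_r r m q (HMul (HC q) (goldman r q (HT i))) = qT_goldman_tmat r m q i"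
proof (intro ext)
  fix a b
  show "pi_r r m q (HMul (HC q) (goldman r q (HT i))) a b = qT_goldman_tmat r m q i a b"
  proof (cases "a \<in> tidx r m \<and> b \<in> tidx r m")
    case True
    then have lb: "i < length b" using i by (simp add: tidx_def)
    have "q * (q - inverse q) = q * q - 1" using q by (simp add: field_simps)
    then show ?thesis
      using True i q swap_at_neq[OF i(1) lb] unfolding pi_qT_goldman_entry[OF i]
      by (auto simp: Tmat_def qT_goldman_tmat_def Let_def algebra_simps tid_def)
  next
    case False
    then show ?thesis
      unfolding pi_qT_goldman_entry[OF i] using i
      by (auto simp: Tmat_def qT_goldman_tmat_def tid_def)
  qed
qed

definition hword :: "(nat \<Rightarrow> 'k hexp) \<Rightarrow> nat list \<Rightarrow> 'k::one hexp" where
  "hword G w = foldr (\<lambda>i acc. HMul (G i) acc) w (HC 1)"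

definition hword_transp_sum ::
  "(nat \<Rightarrow> 'k hexp) \<Rightarrow> (nat \<times> nat) list \<Rightarrow> 'k::{one,zero} hexp" where
  "hword_transp_sum G ps =
     foldr (\<lambda>p acc. HAdd (hword G (transp_word (fst p) (snd p))) acc) ps (HC 0)"

lemma goldman_hword_transp_sum:
  "goldman r q (hword_transp_sum G ps) = hword_transp_sum (\<lambda>i. goldman r q (G i)) ps"
proof -
  have w: "goldman r q (hword G w) = hword (\<lambda>i. goldman r q (G i)) w" for w
    unfolding hword_def by (induction w) auto
  show ?thesis unfolding hword_transp_sum_def by (induction ps) (auto simp: w)
qed

lemma pi_hword: "pi_r r m q (hword G w) = tmat_word r m (\<lambda>i. pi_r r m q (G i)) w"
proof (induction w)
  case Nil
  then show ?case by (auto simp: hword_def tmat_word_def)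
next
  case (Cons i w)
  then show ?case by (simp add: hword_def tmat_word_def)
qed

lemma pi_hword_transp_sum:
  "pi_r r m q (hword_transp_sum G ps) a b =
    (\<Sum>p\<leftarrow>ps. tmat_word r m (\<lambda>i. pi_r r m q (G i)) (transp_word (fst p) (snd p)) a b)"
  by (induction ps) (auto simp: hword_transp_sum_def pi_hword)

definition transp_sum_hexp :: "'k::field \<Rightarrow> nat \<Rightarrow> 'k hexp" where
  "transp_sum_hexp q r = hword_transp_sum (\<lambda>i. HMul (HC q) (HT i)) (transp_pairs r)"

lemma pi_transp_sum_hexp:
  fixes q :: "'k::field"
  assumes q: "q \<noteq> 0"
  shows "pi_r r m q (transp_sum_hexp q r) = transp_sum r m (qT_tmat r m q)"
proof -
  have "pi_r r m q (transp_sum_hexp q r) =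
      transp_sum r m (\<lambda>i. pi_r r m q (HMul (HC q) (HT i)))"
    by (intro ext) (simp add: transp_sum_hexp_def pi_hword_transp_sum transp_sum_def)
  also have "\<dots> = transp_sum r m (qT_tmat r m q)"
    by (rule transp_sum_cong, rule pi_qT[OF q], assumption+)
  finally show ?thesis .
qed

lemma pi_goldman_transp_sum_hexp:
  fixes q :: "'k::field"
  assumes q: "q \<noteq> 0"
  shows "pi_r r m q (goldman r q (transp_sum_hexp q r)) =
    transp_sum r m (qT_goldman_tmat r m q)"
proof -
  have "pi_r r m q (goldman r q (transp_sum_hexp q r)) =
      transp_sum r m (\<lambda>i. pi_r r m q (HMul (HC q) (goldman r q (HT i))))"
    by (intro ext) (simp only: transp_sum_hexp_def goldman_hword_transp_sum pi_hword_transp_sum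
        transp_sum_def goldman.simps(1,4))
  also have "\<dots> = transp_sum r m (qT_goldman_tmat r m q)"
    by (rule transp_sum_cong, rule pi_qT_goldman[OF q], assumption+)
  finally show ?thesis .
qed

section \<open>Positivity of the sum of transpositions\<close>

lemma swap_pos_tidx: "a \<in> tidx r m \<Longrightarrow> k < r \<Longrightarrow> l < r \<Longrightarrow> swap_pos k l a \<in> tidx r m"
  unfolding tidx_def swap_pos_def by (auto simp: set_swap)

lemma swap_pos_swap_pos: "k < length b \<Longrightarrow> l < length b \<Longrightarrow> swap_pos k l (swap_pos k l b) = b"
  unfolding swap_pos_def by (cases "k = l") (auto simp: nth_list_update intro!: nth_equalityI)

lemma swap_pos_commute: "swap_pos k l b = swap_pos l k b"
  unfolding swap_pos_def by (cases "k = l") (auto simp: list_update_swap)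

lemma swap_pos_same: "a!k = a!l \<Longrightarrow> swap_pos k l a = a"
  unfolding swap_pos_def by (metis list_update_id)

lemma list_update_tidx: "c \<in> tidx r m \<Longrightarrow> x < m \<Longrightarrow> c[k:=x] \<in> tidx r m"
  unfolding tidx_def by (auto dest: set_update_subset_insert[THEN subsetD])

lemma tidx_nth_less: "c \<in> tidx r m \<Longrightarrow> k < r \<Longrightarrow> c!k < m"
  unfolding tidx_def by (auto dest: nth_mem)

lemma perm_tmat_swap_pos_apply:
  assumes a: "a \<in> tidx r m" and kl: "k < r" "l < r"
  shows "(\<Sum>b\<in>tidx r m. perm_tmat r m (swap_pos k l) a b * f b) = (f (swap_pos k l a) :: complex)"
proof -
  have "(\<Sum>b\<in>tidx r m. perm_tmat r m (swap_pos k l) a b * f b) =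
      (\<Sum>b\<in>tidx r m. if b = swap_pos k l a then f b else 0)"
  proof (intro sum.cong refl)
    fix b assume b: "b \<in> tidx r m"
    have lb: "length b = r" "length a = r" using a b by (auto simp: tidx_def)
    have "(a = swap_pos k l b) = (b = swap_pos k l a)"
      using swap_pos_swap_pos[of k b l] swap_pos_swap_pos[of k a l] lb kl by metis
    then show "perm_tmat r m (swap_pos k l) a b * f b = (if b = swap_pos k l a then f b else 0)"
      using a b by (simp add: perm_tmat_def)
  qed
  also have "\<dots> = f (swap_pos k l a)" using swap_pos_tidx[OF a kl] by simp
  finally show ?thesis .
qed

lemma swap_sum_tmat_apply:
  assumes a: "a \<in> tidx r m"
  shows "(\<Sum>b\<in>tidx r m. swap_sum_tmat r m a b * f b) =
    (\<Sum>p\<in>set (transp_pairs r). (f (swap_pos (fst p) (snd p) a) :: complex))"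
proof -
  have "(\<Sum>b\<in>tidx r m. swap_sum_tmat r m a b * f b) =
      (\<Sum>b\<in>tidx r m. \<Sum>p\<in>set (transp_pairs r). perm_tmat r m (swap_pos (fst p) (snd p)) a b * f b)"
    by (simp add: swap_sum_tmat_def sum_distrib_right)
  also have "\<dots> =
      (\<Sum>p\<in>set (transp_pairs r). \<Sum>b\<in>tidx r m. perm_tmat r m (swap_pos (fst p) (snd p)) a b * f b)"
    by (rule sum.swap)
  also have "\<dots> = (\<Sum>p\<in>set (transp_pairs r). f (swap_pos (fst p) (snd p) a))"
    by (intro sum.cong refl perm_tmat_swap_pos_apply[OF a]) (auto simp: set_transp_pairs)
  finally show ?thesis .
qed

text \<open>For \<open>f\<close> on the basis, \<open>swap_form f r m = 2 \<langle>f, M f\<rangle>\<close> with \<open>M = swap_sum_tmat r m\<close>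
  (lemma \<open>swap_form_eq_double\<close>). \<open>slot_replace_sum f r x y\<close> is the action on \<open>f\<close> of the matrix
  unit \<open>e\<^sub>y\<^sub>x \<in> gl\<^sub>m\<close> on \<open>V\<^sup>\<otimes>\<^sup>r\<close>, so \<open>replace_form\<close> is a sum of squared norms.\<close>
definition swap_form :: "(nat list \<Rightarrow> complex) \<Rightarrow> nat \<Rightarrow> nat \<Rightarrow> complex" where
  "swap_form f r m =
     (\<Sum>k<r. \<Sum>l<r. if k \<noteq> l then (\<Sum>a\<in>tidx r m. cnj (f a) * f (swap_pos k l a)) else 0)"

definition slot_replace_sum ::
  "(nat list \<Rightarrow> complex) \<Rightarrow> nat \<Rightarrow> nat \<Rightarrow> nat \<Rightarrow> nat list \<Rightarrow> complex" where
  "slot_replace_sum f r x y c = (\<Sum>k<r. if c!k = y then f (c[k:=x]) else 0)"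

definition replace_form :: "(nat list \<Rightarrow> complex) \<Rightarrow> nat \<Rightarrow> nat \<Rightarrow> complex" where
  "replace_form f r m = (\<Sum>x<m. \<Sum>y<m. if y \<noteq> x then
     (\<Sum>c\<in>tidx r m. cnj (slot_replace_sum f r x y c) * slot_replace_sum f r x y c) else 0)"

definition equal_slot_pairs :: "nat \<Rightarrow> nat list \<Rightarrow> real" where
  "equal_slot_pairs r a = (\<Sum>k<r. \<Sum>l<r. if k \<noteq> l \<and> a!k = a!l then 1 else 0)"

lemma swap_form_eq_double:
  fixes f :: "nat list \<Rightarrow> complex"
  shows "swap_form f r m =
    2 * (\<Sum>p\<in>set (transp_pairs r). \<Sum>a\<in>tidx r m. cnj (f a) * f (swap_pos (fst p) (snd p) a))"
proof -
  define T where "T k l = (\<Sum>a\<in>tidx r m. cnj (f a) * f (swap_pos k l a))" for k l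
  have Tc: "T k l = T l k" for k l by (simp add: T_def swap_pos_commute)
  have "swap_form f r m =
      (\<Sum>k<r. \<Sum>l<r. (if k < l then T k l else 0) + (if l < k then T k l else 0))"
    unfolding swap_form_def T_def[symmetric] by (intro sum.cong refl) auto
  also have "\<dots> =
      (\<Sum>k<r. \<Sum>l<r. if k < l then T k l else 0) + (\<Sum>k<r. \<Sum>l<r. if l < k then T l k else 0)"
    by (simp add: sum.distrib, intro sum.cong refl, simp add: Tc)
  also have "(\<Sum>k<r. \<Sum>l<r. if l < k then T l k else 0) =
      (\<Sum>l<r. \<Sum>k<r. if l < k then T l k else 0)"
    by (rule sum.swap)
  also have "(\<Sum>k<r. \<Sum>l<r. if k < l then T k l else 0) =
      (\<Sum>p\<in>set (transp_pairs r). T (fst p) (snd p))"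
  proof -
    have "(\<Sum>k<r. \<Sum>l<r. if k < l then T k l else 0) =
        (\<Sum>p\<in>{..<r} \<times> {..<r}. if fst p < snd p then T (fst p) (snd p) else 0)"
      by (simp add: sum.cartesian_product case_prod_beta)
    also have "\<dots> = (\<Sum>p\<in>{p\<in>{..<r} \<times> {..<r}. fst p < snd p}. T (fst p) (snd p))"
      by (simp add: sum.inter_filter)
    also have "{p\<in>{..<r} \<times> {..<r}. fst p < snd p} = set (transp_pairs r)"
      by (auto simp: set_transp_pairs)
    finally show ?thesis .
  qed
  finally show ?thesis by (simp add: T_def)
qed

lemma sum_update_pair_reindex:
  fixes f :: "nat list \<Rightarrow> complex"
  assumes kl: "k < r" "l < r" "k \<noteq> l" and xy: "x < m" "y < m"
  shows "(\<Sum>c\<in>tidx r m. if c!k = y \<and> c!l = y then cnj (f (c[k:=x])) * f (c[l:=x]) else 0) =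
         (\<Sum>a\<in>tidx r m. if a!k = x \<and> a!l = y then cnj (f a) * f (swap_pos k l a) else 0)"
proof -
  let ?S = "{c\<in>tidx r m. c!k = y \<and> c!l = y}" and ?T = "{a\<in>tidx r m. a!k = x \<and> a!l = y}"
  have len: "length c = r" if "c \<in> tidx r m" for c using that by (simp add: tidx_def)
  have "(\<Sum>c\<in>?S. cnj (f (c[k:=x])) * f (c[l:=x])) = (\<Sum>a\<in>?T. cnj (f a) * f (swap_pos k l a))"
  proof (rule sum.reindex_bij_witness[of ?S "\<lambda>a. a[k:=y]" "\<lambda>c. c[k:=x]"])
    fix c assume c: "c \<in> ?S"
    show "(c[k:=x])[k:=y] = c" using c list_update_id[of c k] by auto
    show "c[k:=x] \<in> ?T" using c kl xy len[of c] by (auto intro: list_update_tidx)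
    show "cnj (f (c[k:=x])) * f (swap_pos k l (c[k:=x])) = cnj (f (c[k:=x])) * f (c[l:=x])"
    proof -
      have "c[k := y] = c" using c list_update_id[of c k] by auto
      then have "swap_pos k l (c[k:=x]) = c[l:=x]"
        using c kl len[of c] by (simp add: swap_pos_def list_update_swap)
      then show ?thesis by simp
    qed
  next
    fix a assume a: "a \<in> ?T"
    show "(a[k:=y])[k:=x] = a" using a list_update_id[of a k] by auto
    show "a[k:=y] \<in> ?S" using a kl xy len[of a] by (auto intro: list_update_tidx)
  qed
  then show ?thesis by (simp add: sum.inter_filter[symmetric])
qed

lemma sum_update_reindex:
  fixes f :: "nat list \<Rightarrow> complex"
  assumes k: "k < r" and xy: "x < m" "y < m"
  shows "(\<Sum>c\<in>tidx r m. if c!k = y then cnj (f (c[k:=x])) * f (c[k:=x]) else 0) =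
         (\<Sum>a\<in>tidx r m. if a!k = x then cnj (f a) * f a else 0)"
proof -
  let ?S = "{c\<in>tidx r m. c!k = y}" and ?T = "{a\<in>tidx r m. a!k = x}"
  have len: "length c = r" if "c \<in> tidx r m" for c using that by (simp add: tidx_def)
  have "(\<Sum>c\<in>?S. cnj (f (c[k:=x])) * f (c[k:=x])) = (\<Sum>a\<in>?T. cnj (f a) * f a)"
  proof (rule sum.reindex_bij_witness[of ?S "\<lambda>a. a[k:=y]" "\<lambda>c. c[k:=x]"])
    fix c assume c: "c \<in> ?S"
    show "(c[k:=x])[k:=y] = c" using c list_update_id[of c k] by auto
    show "c[k:=x] \<in> ?T" using c k xy len[of c] by (auto intro: list_update_tidx)
  next
    fix a assume a: "a \<in> ?T"
    show "(a[k:=y])[k:=x] = a" using a list_update_id[of a k] by auto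
    show "a[k:=y] \<in> ?S" using a k xy len[of a] by (auto intro: list_update_tidx)
  qed simp
  then show ?thesis by (simp add: sum.inter_filter[symmetric])
qed

lemma sum_neq_const:
  fixes c :: "'a::comm_ring_1"
  assumes x0: "x0 < m"
  shows "(\<Sum>y<m. if y \<noteq> x0 then c else 0) = of_nat (m - 1) * c"
proof -
  have "(\<Sum>y<m. if y \<noteq> x0 then c else 0) + (\<Sum>y<m. if y = x0 then c else 0) = (\<Sum>y<m. c)"
    by (simp only: sum.distrib[symmetric]) (intro sum.cong, auto)
  moreover have "(\<Sum>y<m. if y = x0 then c else 0) = c" using x0 by simp
  ultimately have "(\<Sum>y<m. if y \<noteq> x0 then c else 0) = of_nat m * c - c" by (simp add: algebra_simps)
  also have "\<dots> = of_nat (m - 1) * c" using x0 by (simp add: of_nat_diff algebra_simps)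
  finally show ?thesis .
qed

lemma sum_delta_neq_pair:
  fixes C :: "'a::comm_monoid_add" and u v m :: nat
  assumes "u < m" "v < m"
  shows "(\<Sum>x<m. \<Sum>y<m. if y \<noteq> x \<and> u = x \<and> v = y then C else 0) = (if u \<noteq> v then C else 0)"
proof -
  have e: "(\<Sum>y<m. if y \<noteq> x \<and> u = x \<and> v = y then C else 0) =
      (if u = x \<and> v \<noteq> x then C else 0)" for x
  proof -
    have "(\<Sum>y<m. if y \<noteq> x \<and> u = x \<and> v = y then C else 0) =
        (\<Sum>y<m. if v = y then (if u = x \<and> v \<noteq> x then C else 0) else 0)"
      by (intro sum.cong) auto
    also have "\<dots> = (if u = x \<and> v \<noteq> x then C else 0)"
    proof -
      have "(\<Sum>y<m. if v = y then D else 0) = D" for D :: 'a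
        using assms(2) by (subst sum.delta') auto
      then show ?thesis by blast
    qed
    finally show ?thesis .
  qed
  have "(\<Sum>x<m. if u = x \<and> v \<noteq> x then C else 0) =
      (\<Sum>x<m. if u = x then (if u \<noteq> v then C else 0) else 0)"
    by (intro sum.cong) auto
  also have "\<dots> = (if u \<noteq> v then C else 0)" using assms by simp
  finally show ?thesis by (simp add: e)
qed

lemma sum_delta_neq:
  fixes C :: "'a::comm_ring_1"
  assumes "u < m"
  shows "(\<Sum>x<m. \<Sum>y<m. if y \<noteq> x \<and> u = x then C else 0) = of_nat (m - 1) * C"
proof -
  have e: "(\<Sum>y<m. if y \<noteq> x \<and> u = x then C else 0) =
      (if u = x then (\<Sum>y<m. if y \<noteq> u then C else 0) else 0)" for x
    by (cases "u = x") auto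
  have "(\<Sum>x<m. if u = x then (\<Sum>y<m. if y \<noteq> u then C else 0) else 0) =
      (\<Sum>y<m. if y \<noteq> u then C else 0)"
    using assms by simp
  also have "\<dots> = of_nat (m - 1) * C" by (rule sum_neq_const[OF assms])
  finally show ?thesis by (simp only: e)
qed

lemma replace_form_slot_pair:
  fixes f :: "nat list \<Rightarrow> complex"
  assumes k: "k < r" and l: "l < r"
  shows "(\<Sum>x<m. \<Sum>y<m. if y \<noteq> x then
      (\<Sum>c\<in>tidx r m. if c!k = y \<and> c!l = y then cnj (f (c[k:=x])) * f (c[l:=x]) else 0) else 0) =
     (if k = l then of_nat (m - 1) * (\<Sum>a\<in>tidx r m. cnj (f a) * f a)
      else (\<Sum>a\<in>tidx r m. if a!k \<noteq> a!l then cnj (f a) * f (swap_pos k l a) else 0))"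
proof (cases "k = l")
  case True
  have "(\<Sum>x<m. \<Sum>y<m. if y \<noteq> x then
      (\<Sum>c\<in>tidx r m. if c!k = y \<and> c!l = y then cnj (f (c[k:=x])) * f (c[l:=x]) else 0) else 0) =
    (\<Sum>x<m. \<Sum>y<m. if y \<noteq> x then (\<Sum>a\<in>tidx r m. if a!k = x then cnj (f a) * f a else 0) else 0)"
    using True sum_update_reindex[OF k, of _ m _ f] by (intro sum.cong refl) auto
  also have "\<dots> =
      (\<Sum>x<m. \<Sum>y<m. \<Sum>a\<in>tidx r m. if y \<noteq> x \<and> a!k = x then cnj (f a) * f a else 0)"
    by (intro sum.cong refl) (auto simp: sum.If_cases)
  also have "\<dots> =
      (\<Sum>a\<in>tidx r m. \<Sum>x<m. \<Sum>y<m. if y \<noteq> x \<and> a!k = x then cnj (f a) * f a else 0)"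
    by (subst sum.swap, rule sum.cong[OF refl], rule sum.swap)
  also have "\<dots> = (\<Sum>a\<in>tidx r m. of_nat (m - 1) * (cnj (f a) * f a))"
    by (intro sum.cong refl sum_delta_neq tidx_nth_less[OF _ k])
  finally show ?thesis using True by (simp add: sum_distrib_left)
next
  case False
  have "(\<Sum>x<m. \<Sum>y<m. if y \<noteq> x then
      (\<Sum>c\<in>tidx r m. if c!k = y \<and> c!l = y then cnj (f (c[k:=x])) * f (c[l:=x]) else 0) else 0) =
    (\<Sum>x<m. \<Sum>y<m. if y \<noteq> x then
      (\<Sum>a\<in>tidx r m. if a!k = x \<and> a!l = y then cnj (f a) * f (swap_pos k l a) else 0) else 0)"
    using False sum_update_pair_reindex[OF k l False, of _ m _ f] by (intro sum.cong refl) auto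
  also have "\<dots> = (\<Sum>x<m. \<Sum>y<m. \<Sum>a\<in>tidx r m.
      if y \<noteq> x \<and> a!k = x \<and> a!l = y then cnj (f a) * f (swap_pos k l a) else 0)"
    by (intro sum.cong refl) (auto simp: sum.If_cases)
  also have "\<dots> = (\<Sum>a\<in>tidx r m. \<Sum>x<m. \<Sum>y<m.
      if y \<noteq> x \<and> a!k = x \<and> a!l = y then cnj (f a) * f (swap_pos k l a) else 0)"
    by (subst sum.swap, rule sum.cong[OF refl], rule sum.swap)
  also have "\<dots> = (\<Sum>a\<in>tidx r m. if a!k \<noteq> a!l then cnj (f a) * f (swap_pos k l a) else 0)"
    by (intro sum.cong refl sum_delta_neq_pair tidx_nth_less[OF _ k] tidx_nth_less[OF _ l])
  finally show ?thesis using False by simp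
qed

lemma sum_swap_outer: "(\<Sum>c\<in>C. \<Sum>k\<in>K. \<Sum>l\<in>L. g c k l) = (\<Sum>k\<in>K. \<Sum>l\<in>L. \<Sum>c\<in>C. g c k l)"
proof -
  have "(\<Sum>c\<in>C. \<Sum>k\<in>K. \<Sum>l\<in>L. g c k l) = (\<Sum>k\<in>K. \<Sum>c\<in>C. \<Sum>l\<in>L. g c k l)" by (rule sum.swap)
  also have "\<dots> = (\<Sum>k\<in>K. \<Sum>l\<in>L. \<Sum>c\<in>C. g c k l)" by (rule sum.cong[OF refl], rule sum.swap)
  finally show ?thesis .
qed

lemma cnj_slot_replace_sum_sq:
  "cnj (slot_replace_sum f r x y c) * slot_replace_sum f r x y c =
     (\<Sum>k<r. \<Sum>l<r. if c!k = y \<and> c!l = y then cnj (f (c[k:=x])) * f (c[l:=x]) else 0)"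
  unfolding slot_replace_sum_def cnj_sum sum_product by (intro sum.cong refl) auto

lemma replace_form_eq:
  fixes f :: "nat list \<Rightarrow> complex"
  shows "replace_form f r m = of_nat (r * (m - 1)) * (\<Sum>a\<in>tidx r m. cnj (f a) * f a) +
    (\<Sum>k<r. \<Sum>l<r. if k \<noteq> l then
      (\<Sum>a\<in>tidx r m. if a!k \<noteq> a!l then cnj (f a) * f (swap_pos k l a) else 0) else 0)"
proof -
  let ?H = "\<lambda>x y c k l. if c!k = y \<and> c!l = y then cnj (f (c[k:=x])) * f (c[l:=x]) else 0"
  let ?N2 = "\<Sum>a\<in>tidx r m. cnj (f a) * f a"
  let ?X = "\<lambda>k l. \<Sum>a\<in>tidx r m. if a!k \<noteq> a!l then cnj (f a) * f (swap_pos k l a) else 0"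
  have "replace_form f r m =
      (\<Sum>x<m. \<Sum>y<m. \<Sum>c\<in>tidx r m. \<Sum>k<r. \<Sum>l<r. if y \<noteq> x then ?H x y c k l else 0)"
    unfolding replace_form_def cnj_slot_replace_sum_sq
    by (intro sum.cong refl) (auto simp: sum.If_cases)
  also have "\<dots> =
      (\<Sum>x<m. \<Sum>y<m. \<Sum>k<r. \<Sum>l<r. \<Sum>c\<in>tidx r m. if y \<noteq> x then ?H x y c k l else 0)"
    by (intro sum.cong refl sum_swap_outer)
  also have "\<dots> =
      (\<Sum>x<m. \<Sum>k<r. \<Sum>l<r. \<Sum>y<m. \<Sum>c\<in>tidx r m. if y \<noteq> x then ?H x y c k l else 0)"
    by (intro sum.cong refl sum_swap_outer)
  also have "\<dots> =
      (\<Sum>k<r. \<Sum>l<r. \<Sum>x<m. \<Sum>y<m. \<Sum>c\<in>tidx r m. if y \<noteq> x then ?H x y c k l else 0)"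
    by (rule sum_swap_outer)
  also have "\<dots> = (\<Sum>k<r. \<Sum>l<r. (if k = l then of_nat (m - 1) * ?N2 else ?X k l))"
  proof (intro sum.cong refl)
    fix k l assume kl: "k \<in> {..<r}" "l \<in> {..<r}"
    have "(\<Sum>x<m. \<Sum>y<m. \<Sum>c\<in>tidx r m. if y \<noteq> x then ?H x y c k l else 0) =
          (\<Sum>x<m. \<Sum>y<m. if y \<noteq> x then (\<Sum>c\<in>tidx r m. ?H x y c k l) else 0)"
      by (intro sum.cong refl) auto
    also have "\<dots> = (if k = l then of_nat (m - 1) * ?N2 else ?X k l)"
      using replace_form_slot_pair[where f=f and m=m and k=k and l=l and r=r] kl by simp
    finally show "(\<Sum>x<m. \<Sum>y<m. \<Sum>c\<in>tidx r m. if y \<noteq> x then ?H x y c k l else 0) =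
          (if k = l then of_nat (m - 1) * ?N2 else ?X k l)" .
  qed
  also have "\<dots> = (\<Sum>k<r. \<Sum>l<r.
      (if k = l then of_nat (m - 1) * ?N2 else 0) + (if k \<noteq> l then ?X k l else 0))"
    by (intro sum.cong refl) auto
  also have "\<dots> = (\<Sum>k<r. of_nat (m - 1) * ?N2) + (\<Sum>k<r. \<Sum>l<r. if k \<noteq> l then ?X k l else 0)"
    by (simp add: sum.distrib)
  finally show ?thesis by simp
qed

lemma swap_form_eq_replace_form:
  fixes f :: "nat list \<Rightarrow> complex"
  shows "swap_form f r m =
    replace_form f r m - of_nat (r * (m - 1)) * (\<Sum>a\<in>tidx r m. cnj (f a) * f a)
      + (\<Sum>a\<in>tidx r m. cnj (f a) * f a * of_real (equal_slot_pairs r a))"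
proof -
  have kl: "(if k \<noteq> l then (\<Sum>a\<in>tidx r m. cnj (f a) * f (swap_pos k l a)) else 0) =
      (if k \<noteq> l then
        (\<Sum>a\<in>tidx r m. if a!k \<noteq> a!l then cnj (f a) * f (swap_pos k l a) else 0) else 0)
      + (\<Sum>a\<in>tidx r m. if k \<noteq> l \<and> a!k = a!l then cnj (f a) * f a else 0)" for k l
  proof (cases "k = l")
    case True
    then show ?thesis by simp
  next
    case False
    have "(\<Sum>a\<in>tidx r m. cnj (f a) * f (swap_pos k l a)) =
      (\<Sum>a\<in>tidx r m. (if a!k \<noteq> a!l then cnj (f a) * f (swap_pos k l a) else 0)
        + (if a!k = a!l then cnj (f a) * f a else 0))"
      by (rule sum.cong[OF refl]) (simp add: swap_pos_same)
    then show ?thesis using False by (simp add: sum.distrib)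
  qed
  have "swap_form f r m = (\<Sum>k<r. \<Sum>l<r. if k \<noteq> l then
        (\<Sum>a\<in>tidx r m. if a!k \<noteq> a!l then cnj (f a) * f (swap_pos k l a) else 0) else 0)
      + (\<Sum>k<r. \<Sum>l<r. \<Sum>a\<in>tidx r m. if k \<noteq> l \<and> a!k = a!l then cnj (f a) * f a else 0)"
    unfolding swap_form_def kl by (simp only: sum.distrib)
  also have "(\<Sum>k<r. \<Sum>l<r. \<Sum>a\<in>tidx r m. if k \<noteq> l \<and> a!k = a!l then cnj (f a) * f a else 0) =
      (\<Sum>a\<in>tidx r m. \<Sum>k<r. \<Sum>l<r. if k \<noteq> l \<and> a!k = a!l then cnj (f a) * f a else 0)"
    by (rule sum_swap_outer[symmetric])
  also have "\<dots> = (\<Sum>a\<in>tidx r m. cnj (f a) * f a * of_real (equal_slot_pairs r a))"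
    by (intro sum.cong refl)
      (simp add: equal_slot_pairs_def sum_distrib_left if_distrib cong: if_cong)
  finally show ?thesis using replace_form_eq[of f r m] by (simp add: algebra_simps)
qed

lemma cnj_mult_self: "cnj z * z = of_real ((cmod z)^2)"
  using complex_norm_square[of z] by (simp add: mult.commute)

lemma replace_form_nonneg_real: "\<exists>R\<ge>0. replace_form f r m = of_real R"
proof -
  define R where "R = (\<Sum>x<m. \<Sum>y<m. if y \<noteq> x then
    (\<Sum>c\<in>tidx r m. (cmod (slot_replace_sum f r x y c))^2) else 0)"
  have "replace_form f r m = of_real R"
    unfolding replace_form_def cnj_mult_self R_def by (simp add: if_distrib cong: if_cong)
  moreover have "R \<ge> 0"
    unfolding R_def by (intro sum_nonneg) (auto intro: sum_nonneg)
  ultimately show ?thesis by blast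
qed

text \<open>Pigeonhole in quadratic form: the \<open>r\<close> entries of \<open>a\<close> take at most \<open>m\<close> values,
  so the numbers \<open>n\<^sub>x\<close> of entries equal to \<open>x\<close> satisfy \<open>\<Sum> n\<^sub>x\<^sup>2 \<ge> r\<^sup>2 / m > r m\<close>.\<close>
lemma card_equal_pairs_gt:
  assumes a: "length a = r" "set a \<subseteq> {..<m}" and rm: "m^2 < r"
  shows "real r * real m < (\<Sum>k<r. \<Sum>l<r. if a!k = a!l then 1 else 0)"
proof -
  define n where "n x = (\<Sum>k<r. if a!k = x then 1 else 0 :: real)" for x
  have ak: "a!k < m" if "k < r" for k using a that nth_mem by blast
  have "(\<Sum>k<r. \<Sum>l<r. if a!k = a!l then 1 else 0 :: real) =
      (\<Sum>k<r. \<Sum>l<r. \<Sum>x<m. (if a!k = x then 1 else 0) * (if a!l = x then 1 else 0))"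
  proof (intro sum.cong refl)
    fix k l assume "k \<in> {..<r}" "l \<in> {..<r}"
    then show "(if a!k = a!l then 1 else 0 :: real) =
        (\<Sum>x<m. (if a!k = x then 1 else 0) * (if a!l = x then 1 else 0))"
      using ak[of k] by (simp add: if_distrib[where f="\<lambda>z. z * _"] sum.delta' cong: if_cong)
  qed
  also have "\<dots> = (\<Sum>k<r. \<Sum>x<m. \<Sum>l<r. (if a!k = x then 1 else 0) * (if a!l = x then 1 else 0))"
    by (rule sum.cong[OF refl], rule sum.swap)
  also have "\<dots> = (\<Sum>x<m. \<Sum>k<r. \<Sum>l<r. (if a!k = x then 1 else 0) * (if a!l = x then 1 else 0))"
    by (rule sum.swap)
  also have "\<dots> = (\<Sum>x<m. (n x)^2)"
    by (simp add: n_def power2_eq_square sum_product)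
  finally have pairs: "(\<Sum>k<r. \<Sum>l<r. if a!k = a!l then 1 else 0 :: real) = (\<Sum>x<m. (n x)^2)" .
  have "(\<Sum>x<m. n x) = (\<Sum>k<r. \<Sum>x<m. if a!k = x then 1 else 0 :: real)"
    unfolding n_def by (rule sum.swap)
  also have "\<dots> = real r" using ak by simp
  finally have CS: "(real r)^2 \<le> (\<Sum>x<m. (n x)^2) * real m"
    using sum_squared_le_sum_of_squares[of n "{..<m}"] by simp
  have "real m * real m < real r"
    using rm by (simp add: power2_eq_square) (metis of_nat_less_iff of_nat_mult)
  then have "real r * real m * real m < (real r)^2"
    using rm by (simp add: power2_eq_square mult.assoc)
  then have "real r * real m * real m < (\<Sum>x<m. (n x)^2) * real m"
    using CS by linarith
  then show ?thesis
    using pairs by (simp add: mult_less_cancel_right)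
qed

lemma equal_slot_pairs_gt:
  assumes a: "a \<in> tidx r m" and rm: "m^2 < r"
  shows "equal_slot_pairs r a > real r * (real m - 1)"
proof -
  have "(\<Sum>k<r. \<Sum>l<r. if a!k = a!l then 1 else (0::real)) =
      (\<Sum>k<r. \<Sum>l<r. (if k \<noteq> l \<and> a!k = a!l then 1 else 0) + (if k = l then 1 else 0))"
    by (intro sum.cong refl) auto
  also have "\<dots> = equal_slot_pairs r a + real r" by (simp add: sum.distrib equal_slot_pairs_def)
  finally show ?thesis
    using card_equal_pairs_gt[OF _ _ rm, of a] a by (simp add: tidx_def algebra_simps)
qed

lemma swap_form_pos:
  fixes f :: "nat list \<Rightarrow> complex"
  assumes rm: "m^2 < r" and nz: "a0 \<in> tidx r m" "f a0 \<noteq> 0"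
  shows "\<exists>R>0. swap_form f r m = of_real R"
proof -
  obtain F where F: "F \<ge> 0" "replace_form f r m = of_real F"
    using replace_form_nonneg_real by blast
  define E where
    "E = (\<Sum>a\<in>tidx r m. (cmod (f a))^2 * (equal_slot_pairs r a - real r * (real m - 1)))"
  have "m > 0"
    using nz(1) rm by (cases m) (auto simp: tidx_def)
  then have "complex_of_nat (r * (m - 1)) = of_real (real r * (real m - 1))"
    by (simp add: of_nat_diff)
  then have "swap_form f r m = of_real (F - real r * (real m - 1) * (\<Sum>a\<in>tidx r m. (cmod (f a))^2)
      + (\<Sum>a\<in>tidx r m. (cmod (f a))^2 * equal_slot_pairs r a))"
    unfolding swap_form_eq_replace_form F(2) by (simp add: cnj_mult_self)
  also have "\<dots> = of_real (F + E)"
    unfolding E_def by (simp add: sum_distrib_left sum_subtractf sum.distrib algebra_simps)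
  finally have "swap_form f r m = of_real (F + E)" .
  moreover have "E > 0"
    unfolding E_def
  proof (rule sum_pos2[OF finite_tidx nz(1)])
    show "0 < (cmod (f a0))^2 * (equal_slot_pairs r a0 - real r * (real m - 1))"
      using nz equal_slot_pairs_gt[OF nz(1) rm] by simp
    show "0 \<le> (cmod (f a))^2 * (equal_slot_pairs r a - real r * (real m - 1))"
      if "a \<in> tidx r m" for a
      using equal_slot_pairs_gt[OF that rm] by simp
  qed
  ultimately show ?thesis using F(1) by (intro exI[of _ "F + E"]) simp
qed

lemma swap_sum_tmat_eigenvalue_pos:
  assumes rm: "m^2 < r" and ev: "eigenvalue (mat_of_tmat r m (swap_sum_tmat r m) :: complex mat) \<mu>"
  shows "Re \<mu> > 0"
proof -
  obtain f a0 where a0: "a0 \<in> tidx r m" "f a0 \<noteq> 0"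
    and eig: "\<And>a. a \<in> tidx r m \<Longrightarrow> (\<Sum>b\<in>tidx r m. swap_sum_tmat r m a b * f b) = \<mu> * f a"
    using eigenvalue_mat_of_tmat_obtain_eigenfunction[OF ev] by metis
  define n2 where "n2 = (\<Sum>a\<in>tidx r m. (cmod (f a))^2)"
  have n2: "(\<Sum>a\<in>tidx r m. cnj (f a) * f a) = of_real n2"
    by (simp add: n2_def cnj_mult_self)
  have "n2 > 0" unfolding n2_def
    by (rule sum_pos2[OF finite_tidx a0(1)]) (use a0 in auto)
  have "(\<Sum>p\<in>set (transp_pairs r). \<Sum>a\<in>tidx r m. cnj (f a) * f (swap_pos (fst p) (snd p) a)) =
      (\<Sum>a\<in>tidx r m. cnj (f a) * (\<Sum>p\<in>set (transp_pairs r). f (swap_pos (fst p) (snd p) a)))"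
    by (simp add: sum_distrib_left sum.swap[of _ "tidx r m"])
  also have "\<dots> = (\<Sum>a\<in>tidx r m. \<mu> * (cnj (f a) * f a))"
    by (intro sum.cong refl) (simp add: eig swap_sum_tmat_apply[symmetric])
  finally have "swap_form f r m = 2 * \<mu> * of_real n2"
    by (simp add: swap_form_eq_double n2 sum_distrib_left[symmetric] mult.assoc)
  moreover obtain R where "R > 0" "swap_form f r m = of_real R"
    using swap_form_pos[where f=f, OF rm a0] by blast
  ultimately have "\<mu> = of_real (R / (2 * n2))"
    using \<open>n2 > 0\<close> by (simp add: field_simps)
  then show ?thesis using \<open>R > 0\<close> \<open>n2 > 0\<close> by simp
qed

section \<open>Nondegeneracy at transcendental q\<close>

lemma transp_sum_det_one_nonzero:
  assumes "m^2 < r"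
  shows "transp_sum_det r m (1::complex) \<noteq> 0"
proof -
  let ?M = "mat_of_tmat r m (swap_sum_tmat r m) :: complex mat"
  have M: "?M \<in> carrier_mat (tdim r m) (tdim r m)" by simp
  have "mat_of_tmat r m (transp_sum r m (qT_goldman_tmat r m (1::complex))) = - ?M"
    by (simp add: transp_sum_qT_goldman_one) (intro eq_matI; auto)
  then have "transp_sum_det r m (1::complex) = det (poly_mat (char_poly (- ?M)) ?M)"
    by (simp add: transp_sum_det_def transp_sum_qT_one)
  also have "\<dots> \<noteq> 0"
  proof (rule det_poly_mat_char_poly_nonzero[OF M uminus_carrier_mat[OF M]])
    fix \<mu> assume "eigenvalue ?M \<mu>"
    then have "Re \<mu> > 0" by (rule swap_sum_tmat_eigenvalue_pos[OF assms])
    moreover have "Re (- \<mu>) > 0" if "eigenvalue (- ?M) \<mu>"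
      using swap_sum_tmat_eigenvalue_pos[OF assms eigenvalue_uminus_mat[OF M that]] .
    ultimately show "\<not> eigenvalue (- ?M) \<mu>" by force
  qed
  finally show ?thesis .
qed

text \<open>\<open>transp_sum_det\<close> is a polynomial in \<open>q\<close> with rational coefficients that does not vanish
  at \<open>q = 1\<close>, hence not at a transcendental \<open>q\<close>.\<close>
lemma transp_sum_det_nonzero:
  fixes q :: "'k::field_char_0"
  assumes q: "transcendental_over_Q q" and rm: "m^2 < r"
  shows "transp_sum_det r m q \<noteq> 0"
proof -
  define D where "D = transp_sum_det r m [:0, 1::rat:]"
  interpret at_one: comm_ring_hom "\<lambda>p::rat poly. poly (map_poly (of_rat :: rat \<Rightarrow> complex) p) 1"
    by (rule comm_ring_hom_eval_rat_poly)
  interpret at_q: comm_ring_hom "\<lambda>p::rat poly. poly (map_poly (of_rat :: rat \<Rightarrow> 'k) p) q"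
    by (rule comm_ring_hom_eval_rat_poly)
  have "poly (map_poly of_rat D) (1::complex) = transp_sum_det r m 1"
    unfolding D_def at_one.hom_transp_sum_det by simp
  then have "D \<noteq> 0" using transp_sum_det_one_nonzero[OF rm] by auto
  then have "poly (map_poly of_rat D) q \<noteq> 0"
    using q by (simp add: transcendental_over_Q_def)
  also have "poly (map_poly of_rat D) q = transp_sum_det r m q"
    unfolding D_def at_q.hom_transp_sum_det by simp
  finally show ?thesis .
qed

lemma transcendental_over_Q_nonzero: "transcendental_over_Q q \<Longrightarrow> q \<noteq> 0"
  unfolding transcendental_over_Q_def
  by (metis map_poly_pCons pCons_eq_0_iff poly_pCons mult_zero_left add_0 of_rat_0 of_rat_1
      zero_neq_one)

theorem corollary6p2:
  fixes q :: "'k::field_char_0" and r m :: nat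
  assumes "is_alg_closure_of_Qq q"
    and "r \<ge> 2"
    and "m ^ 2 < r"
  shows "A_q r m q = C_q r m q \<and> End_comm r m (C_q r m q) = End_comm r m (A_q r m q)"
proof -
  have q: "transcendental_over_Q q"
    using assms(1) by (simp add: is_alg_closure_of_Qq_def)
  then have "q \<noteq> 0" by (rule transcendental_over_Q_nonzero)
  then have "det (poly_mat
      (char_poly (mat_of_tmat r m (pi_r r m q (goldman r q (transp_sum_hexp q r)))))
      (mat_of_tmat r m (pi_r r m q (transp_sum_hexp q r)))) \<noteq> 0"
    using transp_sum_det_nonzero[OF q assms(3)]
    by (simp add: transp_sum_det_def pi_transp_sum_hexp pi_goldman_transp_sum_hexp)
  then obtain E where "pi_r r m q E = tid r m" "pi_r r m q (goldman r q E) = (\<lambda>a b. 0)"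
    by (rule separating_element_exists)
  then have "A_q r m q \<subseteq> C_q r m q" by (rule A_q_subset_C_q)
  with C_q_subset_A_q have "A_q r m q = C_q r m q" by blast
  then show ?thesis by simp
qed

end
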